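(* Let $f:\mathbb{R}^N\to[0,\infty]$ be a symmetric function and define $F:\mathbb{H}_N\to[0,\infty]$ by $F(X)=f(\lambda(X))$. Let $\gamma>0$. Then $$\mathcal{Q}_\gamma(F)=\mathcal{Q}_\gamma(f)\circ\lambda .$$ Moreover, for every $\rho>\gamma$ and every $X\in\mathbb{H}_N$, $$\operatorname{prox}_{\mathcal{Q}_\gamma(F)/\rho}(X)=U\,\operatorname{diag}\!\big(\operatorname{prox}_{\mathcal{Q}_\gamma(f)/\rho}(\lambda(X))\big)\,U^*,$$ where $X=U\operatorname{diag}(\lambda(X))U^*$ is any spectral decomposition of $X$ with $U$ unitary.
   Context: $\mathbb{H}_N$ denotes the real vector space of $N\times N$ complex Hermitian matrices with the Frobenius inner product $\langle X,Y\rangle_F$ and norm $\|\cdot\|_F$; $\mathbb{R}^N$ carries the Euclidean norm. For $X\in\mathbb{H}_N$, $\lambda(X)\in\mathbb{R}^N$ is the vector of eigenvalues of $X$ ordered non-increasingly. A function $f:\mathbb{R}^N\to[0,\infty]$ is symmetric if $f(\Pi x)=f(x)$ for every permutation matrix $\Pi$ and every $x$. For a function $g$ on a real Hilbert space $\mathcal{H}$ and $\gamma>0$, the quadratic envelope is $$\mathcal{Q}_\gamma(g)(x)=\sup_{\alpha\in\mathbb{R},\,y\in\mathcal{H}}\Big\{\alpha-\tfrac{\gamma}{2}\|x-y\|^2:\ \alpha-\tfrac{\gamma}{2}\|\cdot-y\|^2\le g\Big\}.$$ For a function $h$ on $\mathcal{H}$ and $\rho>0$, $\operatorname{prox}_{h/\rho}(w)=\operatorname{argmin}_{v\in\mathcal{H}}\big(h(v)/\rho+\tfrac12\|v-w\|^2\big)$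 (for $\rho>\gamma$ and $h=\mathcal{Q}_\gamma(\cdot)$ this is single-valued). *)

theory Defs
  imports "HOL-Analysis.Analysis" "HOL-Computational_Algebra.Polynomial"
begin

text \<open>N x N complex matrices are represented by the type complex^'n^'n, with N = CARD('n).
  The HOL-Analysis norm on this type is exactly the Frobenius norm, and the norm on
  real^'n is the Euclidean norm.  The index type carries a linear order, used to list
  eigenvalues non-increasingly.\<close>

definition adj :: "complex^'n^'m \<Rightarrow> complex^'m^'n" where
  "adj A = (\<chi> i j. cnj (A $ j $ i))"

definition hermitian :: "complex^'n^'n \<Rightarrow> bool" where
  "hermitian X \<longleftrightarrow> adj X = X"

definition unitary :: "complex^'n^'n \<Rightarrow> bool" where
  "unitary U \<longleftrightarrow> U ** adj U = mat 1 \<and> adj U ** U = mat 1"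

definition Herm :: "(complex^'n^'n) set" where
  "Herm = {X. hermitian X}"

definition diagm :: "real^'n \<Rightarrow> complex^'n^'n" where
  "diagm d = (\<chi> i j. if i = j then complex_of_real (d $ i) else 0)"

definition charpoly :: "complex^'n^'n \<Rightarrow> complex poly" where
  "charpoly X = det (\<chi> i j. (if i = j then [:0, 1:] else 0) - [:X $ i $ j:])"

definition eigvals :: "complex^'n::{finite,linorder}^'n::{finite,linorder} \<Rightarrow> real^'n::{finite,linorder}" where
  "eigvals X = (THE d. (\<forall>i j. i \<le> j \<longrightarrow> d $ j \<le> d $ i) \<and>
       (\<forall>a. card {i. complex_of_real (d $ i) = a} = order a (charpoly X)))"

definition symmetric_fun :: "(real^'n \<Rightarrow> ereal) \<Rightarrow> bool" where
  "symmetric_fun f \<longleftrightarrow> (\<forall>p x. p permutes (UNIV :: 'n set) \<longrightarrow> f (\<chi> i. x $ p i) = f x)"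

definition qenv :: "'a::real_normed_vector set \<Rightarrow> real \<Rightarrow> ('a \<Rightarrow> ereal) \<Rightarrow> 'a \<Rightarrow> ereal" where
  "qenv S \<gamma> g x = Sup {ereal (\<alpha> - \<gamma> / 2 * (norm (x - y))\<^sup>2) | \<alpha> y.
       y \<in> S \<and> (\<forall>z\<in>S. ereal (\<alpha> - \<gamma> / 2 * (norm (z - y))\<^sup>2) \<le> g z)}"

definition prox :: "'a::real_normed_vector set \<Rightarrow> ('a \<Rightarrow> ereal) \<Rightarrow> real \<Rightarrow> 'a \<Rightarrow> 'a set" where
  "prox S h \<rho> w = {v \<in> S. \<forall>u\<in>S.
       h v / ereal \<rho> + ereal ((norm (v - w))\<^sup>2 / 2) \<le> h u / ereal \<rho> + ereal ((norm (u - w))\<^sup>2 / 2)}"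

end

theory Submission
  imports Defs
begin

text \<open>Everything rests on the Hoffman--Wielandt inequality \<open>\<parallel>\<lambda>(X) - \<lambda>(Y)\<parallel> \<le> \<parallel>X - Y\<parallel>\<^sub>F\<close>,
  which holds with equality when X and Y are diagonalised by the same unitary U; it follows from
  the spectral theorem because the matrix of squared moduli of a unitary matrix is doubly
  stochastic, and pairing sorted vectors through a doubly stochastic matrix is maximised by the
  identity. Hence a quadratic minorant of F centred at Y yields a minorant of f of the same
  height centred at \<lambda>(Y), and a minorant of f centred at y lifts to one of F centred at
  U diag(y) U*, where U diagonalises X; this gives the envelope identity. For the proximal map,
  the matrix objective at Z dominates the vector objective at \<lambda>(Z) and equals the vector
  objective at v on U diag(v) U*, so the images of vector minimisers are matrix minimisers. Since
  \<rho> > \<gamma>, the objective is strongly convex along midpoints and has at most one minimiser,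
  so there are no others.\<close>

section \<open>Adjoints, unitary matrices and the Frobenius norm\<close>

lemma adj_component [simp]: "adj A $ i $ j = cnj (A $ j $ i)"
  by (simp add: adj_def)

lemma adj_adj [simp]: "adj (adj A) = A"
  by (simp add: adj_def vec_eq_iff)

lemma adj_matrix_mult: "adj (A ** B) = adj B ** adj (A::complex^'n^'m)"
  by (simp add: vec_eq_iff matrix_matrix_mult_def mult.commute)

lemma adj_mat1 [simp]: "adj (mat 1 :: complex^'n^'n) = mat 1"
  by (simp add: vec_eq_iff mat_def)

lemma adj_add: "adj (A + B) = adj A + adj B"
  by (simp add: vec_eq_iff)

lemma adj_scaleR: "adj (c *\<^sub>R A) = c *\<^sub>R adj A"
  by (simp add: vec_eq_iff)

lemma diagm_component [simp]: "diagm d $ i $ j = (if i = j then complex_of_real (d $ i) else 0)"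
  by (simp add: diagm_def)

lemma adj_diagm [simp]: "adj (diagm d) = diagm d"
  by (simp add: vec_eq_iff)

lemma diagm_diff: "diagm (x - y) = diagm x - diagm y"
  by (simp add: vec_eq_iff)

lemma diagm_matrix_mult_component: "(diagm a ** W) $ i $ j = of_real (a $ i) * W $ i $ j"
  by (simp add: matrix_matrix_mult_def if_distrib if_distribR cong: if_cong)

lemma matrix_mult_diagm_component: "(W ** diagm b) $ i $ j = W $ i $ j * of_real (b $ j)"
  by (simp add: matrix_matrix_mult_def if_distrib if_distribR cong: if_cong)

lemma matrix_diff_ldistrib: "(A::'a::ring_1^'n^'m) ** (B - C) = A ** B - A ** C"
  by (simp add: vec_eq_iff matrix_matrix_mult_def sum_subtractf algebra_simps)

lemma matrix_diff_rdistrib: "((B::'a::ring_1^'n^'m) - C) ** A = B ** A - C ** A"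
  by (simp add: vec_eq_iff matrix_matrix_mult_def sum_subtractf algebra_simps)

lemma unitary_adj: "unitary U \<Longrightarrow> unitary (adj U)"
  by (simp add: unitary_def)

lemma unitaryI: "adj U ** U = mat 1 \<Longrightarrow> unitary (U::complex^'n^'n)"
  unfolding unitary_def using matrix_left_right_inverse by blast

lemma unitary_mat1: "unitary (mat 1 :: complex^'n^'n)"
  by (simp add: unitary_def)

lemma unitary_mult: assumes "unitary U" "unitary V" shows "unitary (U ** V)"
proof (rule unitaryI)
  have "adj (U ** V) ** (U ** V) = adj V ** (adj U ** U) ** V"
    by (simp add: adj_matrix_mult matrix_mul_assoc)
  also have "\<dots> = mat 1" using assms by (simp add: unitary_def)
  finally show "adj (U ** V) ** (U ** V) = mat 1" .
qed

lemma unitary_conj_diagm_in_Herm: "U ** diagm d ** adj U \<in> Herm"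
  by (simp add: Herm_def hermitian_def adj_matrix_mult matrix_mul_assoc)

lemma Herm_midpoint: "a \<in> Herm \<Longrightarrow> b \<in> Herm \<Longrightarrow> (1/2) *\<^sub>R (a + b) \<in> Herm"
  by (simp add: Herm_def hermitian_def adj_scaleR adj_add)

lemma cnj_mult_self: "cnj z * z = complex_of_real ((cmod z)\<^sup>2)"
  using complex_norm_square[of z] by (simp only: mult.commute)

lemma norm_matrix_sq: "(norm (A::complex^'n^'m))\<^sup>2 = (\<Sum>i\<in>UNIV. \<Sum>j\<in>UNIV. (cmod (A $ i $ j))\<^sup>2)"
  unfolding norm_vec_def L2_set_def by (simp add: sum_nonneg)

lemma norm_matrix_sq_trace: "(norm (A::complex^'n^'n))\<^sup>2 = Re (trace (adj A ** A))"
proof -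
  have "trace (adj A ** A) = (\<Sum>i\<in>UNIV. \<Sum>j\<in>UNIV. cnj (A $ j $ i) * A $ j $ i)"
    by (simp add: trace_def matrix_matrix_mult_def)
  also have "\<dots> = (\<Sum>j\<in>UNIV. \<Sum>i\<in>UNIV. cnj (A $ j $ i) * A $ j $ i)"
    by (rule sum.swap)
  also have "\<dots> = complex_of_real (\<Sum>j\<in>UNIV. \<Sum>i\<in>UNIV. (cmod (A $ j $ i))\<^sup>2)"
    by (simp add: of_real_sum cnj_mult_self)
  finally show ?thesis by (simp add: norm_matrix_sq)
qed

lemma norm_unitary_mult_left:
  assumes "unitary U" shows "norm (U ** A) = norm (A::complex^'n^'n)"
proof -
  have "adj (U ** A) ** (U ** A) = adj A ** (adj U ** U) ** A"
    by (simp add: adj_matrix_mult matrix_mul_assoc)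
  also have "\<dots> = adj A ** A" using assms by (simp add: unitary_def)
  finally have "(norm (U ** A))\<^sup>2 = (norm A)\<^sup>2" by (simp add: norm_matrix_sq_trace)
  thus ?thesis by (simp add: power2_eq_iff_nonneg)
qed

lemma norm_unitary_mult_right:
  assumes "unitary U" shows "norm (A ** U) = norm (A::complex^'n^'n)"
proof -
  have "trace (adj (A ** U) ** (A ** U)) = trace (adj U ** ((adj A ** A) ** U))"
    by (simp add: adj_matrix_mult matrix_mul_assoc)
  also have "\<dots> = trace (((adj A ** A) ** U) ** adj U)" by (rule trace_mul_sym)
  also have "\<dots> = trace (adj A ** A)" using assms by (simp add: unitary_def flip: matrix_mul_assoc)
  finally have "(norm (A ** U))\<^sup>2 = (norm A)\<^sup>2" by (simp add: norm_matrix_sq_trace)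
  thus ?thesis by (simp add: power2_eq_iff_nonneg)
qed

lemma norm_unitary_conj: "unitary U \<Longrightarrow> norm (U ** A ** adj U) = norm (A::complex^'n^'n)"
  by (simp add: norm_unitary_mult_left norm_unitary_mult_right unitary_adj flip: matrix_mul_assoc)

lemma norm_diagm: "norm (diagm d :: complex^'n^'n) = norm (d::real^'n)"
proof -
  have "(cmod (diagm d $ i $ j :: complex))\<^sup>2 = (if j = i then (d$i)\<^sup>2 else 0)" for i j
    by auto
  hence "(norm (diagm d :: complex^'n^'n))\<^sup>2 = (norm d)\<^sup>2"
    unfolding norm_matrix_sq by (simp add: norm_vec_def L2_set_def sum_nonneg)
  thus ?thesis by (simp add: power2_eq_iff_nonneg)
qed

lemma norm_unitary_conj_diagm_diff:
  assumes "unitary U"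
  shows "norm (U ** diagm x ** adj U - U ** diagm y ** adj U) = norm (x - y)"
proof -
  have "U ** diagm x ** adj U - U ** diagm y ** adj U = U ** diagm (x - y) ** adj U"
    by (simp add: diagm_diff matrix_diff_ldistrib matrix_diff_rdistrib)
  thus ?thesis by (simp add: norm_unitary_conj[OF assms] norm_diagm)
qed

lemma unitary_row_norms: assumes "unitary W" shows "(\<Sum>j\<in>UNIV. (cmod (W $ i $ j))\<^sup>2) = 1"
proof -
  have "(W ** adj W) $ i $ i = 1" using assms by (simp add: unitary_def mat_def)
  moreover have "(W ** adj W) $ i $ i = of_real (\<Sum>j\<in>UNIV. (cmod (W $ i $ j))\<^sup>2)"
    by (simp add: matrix_matrix_mult_def of_real_sum flip: complex_norm_square)
  ultimately show ?thesis by (metis of_real_eq_1_iff)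
qed

lemma unitary_column_norms: assumes "unitary W" shows "(\<Sum>i\<in>UNIV. (cmod (W $ i $ j))\<^sup>2) = 1"
proof -
  have "(adj W ** W) $ j $ j = 1" using assms by (simp add: unitary_def mat_def)
  moreover have "(adj W ** W) $ j $ j = of_real (\<Sum>i\<in>UNIV. (cmod (W $ i $ j))\<^sup>2)"
    by (simp add: matrix_matrix_mult_def of_real_sum cnj_mult_self)
  ultimately show ?thesis by (metis of_real_eq_1_iff)
qed


section \<open>The spectral theorem for Hermitian matrices\<close>

definition cinner :: "complex^'n \<Rightarrow> complex^'n \<Rightarrow> complex" where
  "cinner x y = (\<Sum>i\<in>UNIV. cnj (x $ i) * y $ i)"

lemma vector_scaleR_component_complex: "(c *\<^sub>R x) $ i = (of_real c :: complex) * x $ i"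
  unfolding vector_scaleR_component by (rule scaleR_conv_of_real)

lemma cinner_add_left: "cinner (x + y) z = cinner x z + cinner y z"
  by (simp add: cinner_def distrib_right sum.distrib)

lemma cinner_add_right: "cinner x (y + z) = cinner x y + cinner x z"
  by (simp add: cinner_def distrib_left sum.distrib)

lemma cinner_diff_right: "cinner x (y - z) = cinner x y - cinner x z"
  by (simp add: cinner_def right_diff_distrib sum_subtractf)

lemma cinner_scale_left: "cinner (c *s x) y = cnj c * cinner x y"
  by (simp add: cinner_def sum_distrib_left algebra_simps)

lemma cinner_scale_right: "cinner x (c *s y) = c * cinner x y"
  by (simp add: cinner_def sum_distrib_left algebra_simps)

lemma cinner_scaleR_left: "cinner (c *\<^sub>R x) y = of_real c * cinner x y"
  by (simp add: cinner_def sum_distrib_left algebra_simps vector_scaleR_component_complex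
      del: vector_scaleR_component)

lemma cinner_scaleR_right: "cinner x (c *\<^sub>R y) = of_real c * cinner x y"
  by (simp add: cinner_def sum_distrib_left algebra_simps vector_scaleR_component_complex
      del: vector_scaleR_component)

lemma cinner_sum_right: "cinner x (sum f A) = (\<Sum>a\<in>A. cinner x (f a))"
  by (simp add: cinner_def sum_component sum_distrib_left sum.swap[of _ UNIV])

lemma cinner_commute: "cinner y x = cnj (cinner x y)"
  by (simp add: cinner_def mult.commute)

lemma cinner_self: "cinner x x = of_real ((norm x)\<^sup>2)"
  by (simp add: cinner_def norm_vec_def L2_set_def sum_nonneg cnj_mult_self of_real_sum)

lemma continuous_on_cinner_right: "continuous_on UNIV (cinner v)"
  unfolding cinner_def by (intro continuous_intros)

lemma matrix_vector_mult_scaleR_complex: "(X::complex^'n^'m) *v (c *\<^sub>R x) = c *\<^sub>R (X *v x)"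
  by (simp add: vec_eq_iff matrix_vector_mult_def vector_scaleR_component_complex
      sum_distrib_left algebra_simps del: vector_scaleR_component)

lemma hermitian_cinner: assumes "hermitian X"
  shows "cinner x (X *v y) = cinner (X *v x) y"
proof -
  have X: "\<And>i j. cnj (X $ j $ i) = X $ i $ j"
    using assms unfolding hermitian_def by (metis adj_component)
  have "cinner x (X *v y) = (\<Sum>i\<in>UNIV. \<Sum>j\<in>UNIV. cnj (x $ i) * (X $ i $ j * y $ j))"
    by (simp add: cinner_def matrix_vector_mult_def sum_distrib_left)
  also have "\<dots> = (\<Sum>j\<in>UNIV. \<Sum>i\<in>UNIV. cnj (x $ i) * (X $ i $ j * y $ j))"
    by (rule sum.swap)
  also have "\<dots> = cinner (X *v x) y"
    unfolding cinner_def matrix_vector_mult_def by (simp add: X sum_distrib_left mult_ac)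
  finally show ?thesis .
qed

lemma hermitian_cinner_self_real: assumes "hermitian X"
  shows "of_real (Re (cinner x (X *v x))) = cinner x (X *v x)"
proof -
  have "cnj (cinner x (X *v x)) = cinner x (X *v x)"
    by (metis assms cinner_commute hermitian_cinner)
  thus ?thesis by (metis Reals_cnj_iff complex_is_Real_iff of_real_Re)
qed

lemma exists_nonzero_orthogonal:
  fixes V :: "nat \<Rightarrow> complex^'n"
  assumes k: "k < CARD('n)"
    and orthonormal: "\<forall>i<k. \<forall>j<k. cinner (V i) (V j) = (if i = j then 1 else 0)"
  shows "\<exists>w. w \<noteq> 0 \<and> (\<forall>i<k. cinner (V i) w = 0)"
proof -
  have "vec.span (V ` {..<k}) \<noteq> UNIV"
  proof
    assume "vec.span (V ` {..<k}) = UNIV"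
    hence "vec.dim (UNIV::(complex^'n) set) \<le> card (V ` {..<k})"
      by (intro vec.dim_le_card) auto
    also have "\<dots> \<le> k" using card_image_le[of "{..<k}" V] by simp
    finally show False using k vec_dim_card[where 'a=complex and 'n='n] by simp
  qed
  then obtain e where e: "e \<notin> vec.span (V ` {..<k})" by blast
  \<comment> \<open>Gram--Schmidt: remove from e its components along the V i.\<close>
  define w where "w = e - (\<Sum>i<k. cinner (V i) e *s V i)"
  have "w \<noteq> 0"
  proof
    assume "w = 0"
    hence "e = (\<Sum>i<k. cinner (V i) e *s V i)" by (simp add: w_def)
    also have "\<dots> \<in> vec.span (V ` {..<k})"
      by (intro vec.span_sum vec.span_scale vec.span_base) auto
    finally show False using e by simp
  qed
  moreover have "cinner (V j) w = 0" if j: "j < k" for j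
  proof -
    have "(\<Sum>i<k. cinner (V i) e * cinner (V j) (V i)) = (\<Sum>i<k. if i = j then cinner (V i) e else 0)"
      by (rule sum.cong) (use orthonormal j in auto)
    thus ?thesis using j
      by (simp add: w_def cinner_diff_right cinner_sum_right cinner_scale_right)
  qed
  ultimately show ?thesis by blast
qed

lemma nonpos_if_quadratic_nonpos:
  fixes a c :: real
  assumes "\<And>t. t > 0 \<Longrightarrow> 2 * t * a + t\<^sup>2 * c \<le> 0"
  shows "a \<le> 0"
proof (rule ccontr)
  assume "\<not> a \<le> 0"
  hence a: "a > 0" by simp
  define t where "t = a / (\<bar>c\<bar> + 1)"
  have t: "t > 0" using a by (simp add: t_def)
  have "t * \<bar>c\<bar> < a"
  proof -
    have "t * \<bar>c\<bar> = a * (\<bar>c\<bar> / (\<bar>c\<bar> + 1))" by (simp add: t_def)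
    also have "\<dots> < a * 1" using a by (intro mult_strict_left_mono) auto
    finally show ?thesis by simp
  qed
  hence "0 < t * (2 * a - t * \<bar>c\<bar>)" using a t by simp
  also have "\<dots> \<le> 2 * t * a + t\<^sup>2 * c"
    using mult_nonneg_nonneg[of "t * t" "c + \<bar>c\<bar>"] by (simp add: power2_eq_square algebra_simps)
  finally show False using assms[OF t] by simp
qed

definition quad_form :: "complex^'n^'n \<Rightarrow> complex^'n \<Rightarrow> real" where
  "quad_form X x = Re (cinner x (X *v x))"

lemma quad_form_scaleR: "quad_form X (c *\<^sub>R z) = c\<^sup>2 * quad_form X z"
  by (simp add: quad_form_def matrix_vector_mult_scaleR_complex cinner_scaleR_left cinner_scaleR_right
      power2_eq_square)

lemma quad_form_add_scaleR:
  assumes "hermitian X"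
  shows "quad_form X (x + t *\<^sub>R y) = quad_form X x + 2 * t * Re (cinner y (X *v x)) + t\<^sup>2 * quad_form X y"
proof -
  have "cinner x (X *v y) = cnj (cinner y (X *v x))"
    by (metis assms cinner_commute hermitian_cinner)
  hence "Re (cinner x (X *v y)) = Re (cinner y (X *v x))" by simp
  thus ?thesis
    by (simp add: quad_form_def matrix_vector_right_distrib matrix_vector_mult_scaleR_complex
        cinner_add_left cinner_add_right cinner_scaleR_left cinner_scaleR_right power2_eq_square
        algebra_simps)
qed

lemma norm_add_scaleR_orthogonal:
  assumes "cinner x y = 0"
  shows "(norm (x + t *\<^sub>R y))\<^sup>2 = (norm x)\<^sup>2 + t\<^sup>2 * (norm y)\<^sup>2"
proof -
  have "cinner y x = 0" using assms by (metis cinner_commute complex_cnj_zero)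
  hence "cinner (x + t *\<^sub>R y) (x + t *\<^sub>R y) = cinner x x + of_real (t\<^sup>2) * cinner y y"
    using assms by (simp add: cinner_add_left cinner_add_right cinner_scaleR_left cinner_scaleR_right
        power2_eq_square)
  thus ?thesis unfolding cinner_self by (simp only: flip: of_real_mult of_real_add) (simp only: of_real_eq_iff)
qed

lemma quad_form_max_first_order:
  assumes herm: "hermitian X" and x: "norm x = 1" and orth: "cinner x y = 0"
    and max: "\<And>t. quad_form X (x + t *\<^sub>R y) \<le> quad_form X x * (norm (x + t *\<^sub>R y))\<^sup>2"
  shows "Re (cinner y (X *v x)) = 0"
proof -
  define b c where "b = Re (cinner y (X *v x))" and "c = quad_form X y - quad_form X x * (norm y)\<^sup>2"
  have q: "2 * t * b + t\<^sup>2 * c \<le> 0" for t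
    using max[of t] by (simp add: b_def c_def quad_form_add_scaleR[OF herm] norm_add_scaleR_orthogonal[OF orth]
        x algebra_simps)
  have "b \<le> 0" by (rule nonpos_if_quadratic_nonpos[of b c]) (rule q)
  moreover have "- b \<le> 0" by (rule nonpos_if_quadratic_nonpos[of "- b" c]) (use q[of "- _"] in simp)
  ultimately show ?thesis by (simp add: b_def)
qed

lemma exists_quad_form_max:
  fixes X :: "complex^'n^'n"
  assumes "closed C" and C_scaleR: "\<And>c z. z \<in> C \<Longrightarrow> c *\<^sub>R z \<in> C" and "w \<in> C" "w \<noteq> 0"
  shows "\<exists>x\<in>C. norm x = 1 \<and> (\<forall>z\<in>C. quad_form X z \<le> quad_form X x * (norm z)\<^sup>2)"
proof -
  have "compact (sphere 0 1 \<inter> C)" using assms(1) by (intro compact_Int_closed) auto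
  moreover have "(1 / norm w) *\<^sub>R w \<in> sphere 0 1 \<inter> C" using assms(3,4) C_scaleR by simp
  moreover have "continuous_on (sphere 0 1 \<inter> C) (quad_form X)"
    unfolding quad_form_def cinner_def matrix_vector_mult_def by (intro continuous_intros)
  ultimately obtain x where x: "x \<in> sphere 0 1 \<inter> C"
    and x_max: "\<forall>z\<in>sphere 0 1 \<inter> C. quad_form X z \<le> quad_form X x"
    using continuous_attains_sup[of "sphere 0 1 \<inter> C" "quad_form X"] by blast
  have "quad_form X z \<le> quad_form X x * (norm z)\<^sup>2" if "z \<in> C" for z
  proof (cases "z = 0")
    case True
    then show ?thesis using quad_form_scaleR[of X 0 z] by simp
  next
    case False
    hence "quad_form X ((1 / norm z) *\<^sub>R z) \<le> quad_form X x" using that x_max C_scaleR by simp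
    thus ?thesis using False by (simp add: quad_form_scaleR field_simps power2_eq_square)
  qed
  thus ?thesis using x by auto
qed

text \<open>The maximiser x of the Rayleigh quotient on the orthogonal complement C of the V i is an
  eigenvector: the residual X x - \<mu> x lies in C and is orthogonal to x, so by the first-order
  condition its squared norm vanishes.\<close>
lemma hermitian_eigenvector_orthogonal:
  fixes X :: "complex^'n^'n" and V :: "nat \<Rightarrow> complex^'n"
  assumes herm: "hermitian X" and k: "k < CARD('n)"
    and orthonormal: "\<forall>i<k. \<forall>j<k. cinner (V i) (V j) = (if i = j then 1 else 0)"
    and eigen: "\<forall>i<k. \<exists>c::real. X *v V i = of_real c *s V i"
  shows "\<exists>x \<mu>. norm x = 1 \<and> (\<forall>i<k. cinner (V i) x = 0) \<and> X *v x = of_real \<mu> *s x"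
proof -
  define C where "C = {x. \<forall>i<k. cinner (V i) x = 0}"
  have C_add: "a + b \<in> C" if "a \<in> C" "b \<in> C" for a b
    using that by (simp add: C_def cinner_add_right)
  have C_scaleR: "c *\<^sub>R z \<in> C" if "z \<in> C" for c z
    using that by (simp add: C_def cinner_scaleR_right)
  have "closed C"
    unfolding C_def Collect_all_eq
    by (intro closed_INT ballI closed_Collect_imp closed_Collect_eq)
      (auto intro: continuous_on_cinner_right continuous_intros)
  moreover obtain w where "w \<noteq> 0" "w \<in> C"
    using exists_nonzero_orthogonal[OF k orthonormal] by (auto simp: C_def)
  ultimately obtain x where xC: "x \<in> C" and nx: "norm x = 1"
    and max: "\<forall>z\<in>C. quad_form X z \<le> quad_form X x * (norm z)\<^sup>2"
    using exists_quad_form_max[of C] C_scaleR by blast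
  define \<mu> where "\<mu> = quad_form X x"
  have cxX: "cinner x (X *v x) = of_real \<mu>"
    unfolding \<mu>_def quad_form_def using hermitian_cinner_self_real[OF herm] by simp
  define y where "y = X *v x - of_real \<mu> *s x"
  have yC: "y \<in> C" unfolding C_def mem_Collect_eq
  proof (intro allI impI)
    fix i assume i: "i < k"
    obtain c :: real where c: "X *v V i = of_real c *s V i" using eigen i by blast
    have "cinner (V i) (X *v x) = cinner (X *v V i) x" by (rule hermitian_cinner[OF herm])
    also have "\<dots> = 0" using xC i by (simp add: C_def c cinner_scale_left)
    finally show "cinner (V i) y = 0"
      using xC i by (simp add: C_def y_def cinner_diff_right cinner_scale_right)
  qed
  have xy: "cinner x y = 0"
    using nx by (simp add: y_def cinner_diff_right cinner_scale_right cinner_self cxX)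
  have "cinner y (X *v x) = cinner y y"
  proof -
    have "cinner y x = 0" using xy by (metis cinner_commute complex_cnj_zero)
    moreover have "X *v x = y + of_real \<mu> *s x" by (simp add: y_def)
    ultimately show ?thesis by (simp add: cinner_add_right cinner_scale_right)
  qed
  moreover have "Re (cinner y (X *v x)) = 0"
    using max xC yC nx xy by (intro quad_form_max_first_order[OF herm]) (auto intro: C_add C_scaleR)
  ultimately have "y = 0" by (simp add: cinner_self)
  hence "X *v x = of_real \<mu> *s x" by (simp add: y_def)
  thus ?thesis using nx xC by (auto simp: C_def)
qed

lemma hermitian_orthonormal_eigenvectors:
  fixes X :: "complex^'n^'n"
  assumes herm: "hermitian X"
  shows "k \<le> CARD('n) \<Longrightarrow> \<exists>V d. (\<forall>i<k. \<forall>j<k. cinner (V i) (V j) = (if i = j then 1 else 0))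
          \<and> (\<forall>i<k. X *v V i = of_real (d i) *s V i)"
proof (induction k)
  case 0
  then show ?case by auto
next
  case (Suc k)
  then obtain V d where orthonormal: "\<forall>i<k. \<forall>j<k. cinner (V i) (V j) = (if i = j then 1 else 0)"
    and eigen: "\<forall>i<k. X *v V i = of_real (d i) *s V i" by auto
  have "\<forall>i<k. \<exists>c::real. X *v V i = of_real c *s V i" using eigen by blast
  from hermitian_eigenvector_orthogonal[OF herm _ orthonormal this] Suc.prems obtain x \<mu> where
    x: "norm x = 1" "\<forall>i<k. cinner (V i) x = 0" "X *v x = of_real \<mu> *s x" by auto
  have "cinner x x = 1" using x(1) by (simp add: cinner_self)
  moreover have "\<forall>i<k. cinner x (V i) = 0" using x(2) by (metis cinner_commute complex_cnj_zero)
  ultimately have "\<forall>i<Suc k. \<forall>j<Suc k. cinner ((V(k := x)) i) ((V(k := x)) j) = (if i = j then 1 else 0)"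
    using orthonormal x(2) by (auto simp: less_Suc_eq)
  moreover have "\<forall>i<Suc k. X *v (V(k := x)) i = of_real ((d(k := \<mu>)) i) *s (V(k := x)) i"
    using eigen x(3) by (auto simp: less_Suc_eq)
  ultimately show ?case by blast
qed

theorem hermitian_unitary_diagonalisation:
  fixes X :: "complex^'n^'n"
  assumes herm: "hermitian X"
  shows "\<exists>U d. unitary U \<and> X = U ** diagm d ** adj U"
proof -
  obtain V d where orthonormal: "\<forall>i<CARD('n). \<forall>j<CARD('n). cinner (V i) (V j) = (if i = j then 1 else 0)"
    and eigen: "\<forall>i<CARD('n). X *v V i = of_real (d i) *s V i"
    using hermitian_orthonormal_eigenvectors[OF herm, of "CARD('n)"] by auto
  obtain h where h: "bij_betw h {0..<CARD('n)} (UNIV::'n set)"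
    using ex_bij_betw_nat_finite[of "UNIV::'n set"] by auto
  define g where "g = inv_into {0..<CARD('n)} h"
  have g: "bij_betw g (UNIV::'n set) {0..<CARD('n)}" unfolding g_def by (rule bij_betw_inv_into[OF h])
  have g_less: "g a < CARD('n)" for a using g by (auto simp: bij_betw_def)
  have g_eq_iff: "g a = g b \<longleftrightarrow> a = b" for a b using g by (auto simp: bij_betw_def inj_on_def)
  define U :: "complex^'n^'n" where "U = (\<chi> i j. V (g j) $ i)"
  have "(adj U ** U) $ a $ b = cinner (V (g a)) (V (g b))" for a b
    by (simp add: U_def matrix_matrix_mult_def cinner_def)
  hence "adj U ** U = mat 1"
    using orthonormal g_less g_eq_iff by (simp add: vec_eq_iff mat_def)
  hence U: "unitary U" by (rule unitaryI)
  have "(X ** U) $ i $ j = (U ** diagm (\<chi> j. d (g j))) $ i $ j" for i j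
  proof -
    have "(X ** U) $ i $ j = (X *v V (g j)) $ i"
      by (simp add: U_def matrix_matrix_mult_def matrix_vector_mult_def)
    also have "\<dots> = of_real (d (g j)) * V (g j) $ i" using eigen g_less by simp
    finally show ?thesis by (simp add: U_def matrix_mult_diagm_component mult.commute)
  qed
  hence XU: "X ** U = U ** diagm (\<chi> j. d (g j))" by (simp add: vec_eq_iff)
  have "X = X ** (U ** adj U)" using U by (simp add: unitary_def)
  also have "\<dots> = U ** diagm (\<chi> j. d (g j)) ** adj U" by (simp add: matrix_mul_assoc XU)
  finally show ?thesis using U by blast
qed


section \<open>Eigenvalues of unitarily conjugated diagonal matrices\<close>

definition sorted_desc :: "real^'n::{finite,linorder} \<Rightarrow> bool" where
  "sorted_desc d \<longleftrightarrow> (\<forall>i j. i \<le> j \<longrightarrow> d $ j \<le> d $ i)"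

definition permute_vec :: "('n \<Rightarrow> 'n) \<Rightarrow> real^'n \<Rightarrow> real^'n" where
  "permute_vec p d = (\<chi> k. d $ p k)"

lemma permute_vec_component [simp]: "permute_vec p d $ k = d $ p k"
  by (simp add: permute_vec_def)

lemma permute_vec_diff: "permute_vec p (x - y) = permute_vec p x - permute_vec p y"
  by (simp add: vec_eq_iff)

lemma permute_vec_inv:
  assumes "p permutes UNIV"
  shows "permute_vec p (permute_vec (inv p) y) = y" "permute_vec (inv p) (permute_vec p y) = y"
  using assms by (simp_all add: vec_eq_iff permutes_inverses)

lemma norm_permute_vec: assumes "p permutes UNIV" shows "norm (permute_vec p d) = norm d"
proof -
  have "(\<Sum>k\<in>UNIV. (d $ p k)\<^sup>2) = (\<Sum>k\<in>UNIV. (d $ k)\<^sup>2)"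
    using sum.permute[OF assms, of "\<lambda>k. (d $ k)\<^sup>2"] by (simp add: comp_def)
  thus ?thesis by (simp add: norm_vec_def L2_set_def)
qed

lemma symmetric_fun_permute_vec: "symmetric_fun f \<Longrightarrow> p permutes UNIV \<Longrightarrow> f (permute_vec p x) = f x"
  unfolding symmetric_fun_def permute_vec_def by blast

text \<open>Sorting maximises the pairing with the strictly decreasing weights w; a maximiser that is
  not sorted would be improved by a transposition.\<close>
lemma exists_sorting_permutation:
  "\<exists>p. p permutes (UNIV::'n::{finite,linorder} set) \<and> sorted_desc (permute_vec p d)"
proof -
  define w :: "'n \<Rightarrow> real" where "w i = real (card {j. i < j})" for i
  have w_less: "w j < w i" if "i < j" for i j
  proof -
    have "{l. j < l} \<subset> {l. i < l}" using that by auto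
    hence "card {l. j < l} < card {l. i < l}" by (intro psubset_card_mono) auto
    thus ?thesis by (simp add: w_def)
  qed
  define P where "P = {p. p permutes (UNIV::'n set)}"
  define \<phi> where "\<phi> p = (\<Sum>k\<in>UNIV. d $ p k * w k)" for p
  have "finite P" unfolding P_def by (rule finite_permutations) simp
  moreover have "id \<in> P" by (simp add: P_def permutes_id)
  ultimately have "Max (\<phi> ` P) \<in> \<phi> ` P" by (intro Max_in) auto
  then obtain p where p: "p \<in> P" and "\<phi> p = Max (\<phi> ` P)" by auto
  with \<open>finite P\<close> have p_max: "\<forall>q\<in>P. \<phi> q \<le> \<phi> p" by simp
  have "sorted_desc (permute_vec p d)" unfolding sorted_desc_def
  proof (intro allI impI)
    fix i j :: 'n assume ij: "i \<le> j"
    show "permute_vec p d $ j \<le> permute_vec p d $ i"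
    proof (rule ccontr)
      assume "\<not> ?thesis"
      hence less: "d $ p i < d $ p j" by simp
      hence "i < j" using ij by (auto simp: order_le_less)
      define q where "q = p \<circ> Transposition.transpose i j"
      have "q \<in> P" using p unfolding P_def q_def
        by (auto intro!: permutes_compose permutes_swap_id)
      have "\<phi> q - \<phi> p = (\<Sum>k\<in>UNIV. d $ q k * w k - d $ p k * w k)"
        by (simp add: \<phi>_def sum_subtractf)
      also have "\<dots> = (\<Sum>k\<in>{i,j}. d $ q k * w k - d $ p k * w k)"
        by (rule sum.mono_neutral_right) (auto simp: q_def Transposition.transpose_def)
      also have "\<dots> = (d $ p j - d $ p i) * (w i - w j)"
        using \<open>i < j\<close> by (simp add: q_def Transposition.transpose_def algebra_simps)
      also have "\<dots> > 0" using less w_less[OF \<open>i < j\<close>] by simp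
      finally show False using p_max \<open>q \<in> P\<close> by fastforce
    qed
  qed
  thus ?thesis using p by (auto simp: P_def)
qed

lemma card_ge_eq_sum_card_eq:
  fixes d :: "'a::finite \<Rightarrow> real" and R :: "real set"
  assumes "finite R" "range d \<subseteq> R"
  shows "card {i. t \<le> d i} = (\<Sum>a\<in>R \<inter> {t..}. card {i. d i = a})"
proof -
  have "(\<Sum>a\<in>R \<inter> {t..}. sum (\<lambda>_. 1::nat) {i. i \<in> {i. t \<le> d i} \<and> d i = a})
      = (\<Sum>i\<in>{i. t \<le> d i}. 1)"
    by (rule sum.group) (use assms in \<open>auto intro: rev_finite_subset\<close>)
  hence "card {i. t \<le> d i} = (\<Sum>a\<in>R \<inter> {t..}. card {i \<in> {i. t \<le> d i}. d i = a})"
    by simp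
  also have "\<dots> = (\<Sum>a\<in>R \<inter> {t..}. card {i. d i = a})"
    by (rule sum.cong) (auto intro!: arg_cong[where f=card])
  finally show ?thesis .
qed

lemma sorted_desc_ge_iff:
  fixes d :: "real^'n::{finite,linorder}"
  assumes "sorted_desc d"
  shows "t \<le> d $ j \<longleftrightarrow> card {i. i \<le> j} \<le> card {i. t \<le> d $ i}"
proof
  assume "t \<le> d $ j"
  hence "{i. i \<le> j} \<subseteq> {i. t \<le> d $ i}" using assms by (auto simp: sorted_desc_def intro: order_trans)
  thus "card {i. i \<le> j} \<le> card {i. t \<le> d $ i}" by (intro card_mono) auto
next
  assume c: "card {i. i \<le> j} \<le> card {i. t \<le> d $ i}"
  show "t \<le> d $ j"
  proof (rule ccontr)
    assume "\<not> t \<le> d $ j"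
    hence "{i. t \<le> d $ i} \<subseteq> {i. i < j}" using assms
      by (auto simp: sorted_desc_def not_less) (meson leI order_trans)
    hence "card {i. t \<le> d $ i} \<le> card {i. i < j}" by (intro card_mono) auto
    also have "\<dots> < card {i. i \<le> j}" by (intro psubset_card_mono) auto
    finally show False using c by simp
  qed
qed

lemma sorted_desc_eqI:
  fixes d e :: "real^'n::{finite,linorder}"
  assumes "sorted_desc d" "sorted_desc e" and same_counts: "\<And>a. card {i. d $ i = a} = card {i. e $ i = a}"
  shows "d = e"
proof -
  define R where "R = range (\<lambda>i. d $ i) \<union> range (\<lambda>i. e $ i)"
  have "card {i. t \<le> d $ i} = card {i. t \<le> e $ i}" for t
  proof -
    have "card {i. t \<le> d $ i} = (\<Sum>a\<in>R \<inter> {t..}. card {i. d $ i = a})"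
      by (rule card_ge_eq_sum_card_eq[where d="\<lambda>i. d $ i"]) (auto simp: R_def)
    also have "\<dots> = (\<Sum>a\<in>R \<inter> {t..}. card {i. e $ i = a})" using same_counts by simp
    also have "\<dots> = card {i. t \<le> e $ i}"
      by (rule card_ge_eq_sum_card_eq[where d="\<lambda>i. e $ i", symmetric]) (auto simp: R_def)
    finally show ?thesis .
  qed
  hence "t \<le> d $ j \<longleftrightarrow> t \<le> e $ j" for t j
    using sorted_desc_ge_iff[OF assms(1)] sorted_desc_ge_iff[OF assms(2)] by metis
  hence "d $ j = e $ j" for j by (meson order_antisym order_refl)
  thus ?thesis by (simp add: vec_eq_iff)
qed

lemma matrix_matrix_mult_component:
  "((A::'a::semiring_1^'n^'m) ** B) $ i $ j = (\<Sum>k\<in>UNIV. A $ i $ k * B $ k $ j)"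
  by (simp add: matrix_matrix_mult_def)

definition perm_matrix :: "('n \<Rightarrow> 'n) \<Rightarrow> complex^'n^'n" where
  "perm_matrix p = (\<chi> i j. if i = p j then 1 else 0)"

lemma unitary_perm_matrix: assumes "p permutes UNIV" shows "unitary (perm_matrix p)"
proof (rule unitaryI)
  have inj: "p a = p b \<longleftrightarrow> a = b" for a b using assms by (metis permutes_inj injD)
  have "(adj (perm_matrix p) ** perm_matrix p) $ a $ b = mat 1 $ a $ b" for a b
  proof -
    have "(adj (perm_matrix p) ** perm_matrix p) $ a $ b
       = (\<Sum>k\<in>UNIV. (if k = p a then 1 else 0) * (if k = p b then 1 else 0))"
      by (simp add: perm_matrix_def matrix_matrix_mult_def if_distrib[of cnj] cong: if_cong)
    also have "\<dots> = (\<Sum>k\<in>UNIV. if k = p a then (if a = b then 1 else 0) else 0)"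
      by (rule sum.cong) (auto simp: inj)
    finally show ?thesis by (simp add: mat_def)
  qed
  thus "adj (perm_matrix p) ** perm_matrix p = mat 1" by (simp add: vec_eq_iff)
qed

lemma perm_matrix_conj_diagm:
  assumes "p permutes UNIV"
  shows "perm_matrix p ** diagm (permute_vec p d) ** adj (perm_matrix p) = diagm d"
proof -
  have inv: "p (inv p a) = a" for a using assms by (simp add: permutes_inverses)
  have inv_iff: "a = p k \<longleftrightarrow> k = inv p a" for a k using assms
    by (metis permutes_inverses(2) inv)
  have PD: "(perm_matrix p ** diagm (permute_vec p d)) $ a $ k
      = (if k = inv p a then of_real (d $ a) else 0)" for a k
    by (simp add: perm_matrix_def matrix_mult_diagm_component inv_iff[symmetric])
  have "(perm_matrix p ** diagm (permute_vec p d) ** adj (perm_matrix p)) $ a $ b = diagm d $ a $ b" for a b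
  proof -
    have "(perm_matrix p ** diagm (permute_vec p d) ** adj (perm_matrix p)) $ a $ b
        = (\<Sum>k\<in>UNIV. (if k = inv p a then of_real (d $ a) else 0) * (if b = p k then 1 else 0))"
      by (subst matrix_matrix_mult_component)
        (simp only: PD, simp add: perm_matrix_def if_distrib[of cnj] cong: if_cong)
    also have "\<dots> = (\<Sum>k\<in>UNIV. if k = inv p a then (if b = a then of_real (d $ a) else 0) else 0)"
      by (rule sum.cong) (auto simp: inv)
    finally show ?thesis by simp
  qed
  thus ?thesis by (simp add: vec_eq_iff)
qed

lemma unitary_conj_diagm_permute:
  assumes "p permutes UNIV"
  shows "U ** diagm d ** adj U = (U ** perm_matrix p) ** diagm (permute_vec p d) ** adj (U ** perm_matrix p)"
proof -
  have "(U ** perm_matrix p) ** diagm (permute_vec p d) ** adj (U ** perm_matrix p)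
      = U ** (perm_matrix p ** diagm (permute_vec p d) ** adj (perm_matrix p)) ** adj U"
    by (simp add: adj_matrix_mult matrix_mul_assoc)
  thus ?thesis by (simp add: perm_matrix_conj_diagm[OF assms])
qed

definition poly_matrix :: "complex^'n^'m \<Rightarrow> complex poly^'n^'m" where
  "poly_matrix M = (\<chi> i j. [:M $ i $ j:])"

definition poly_var_matrix :: "complex poly^'n^'n" where
  "poly_var_matrix = (\<chi> i j. if i = j then [:0, 1:] else 0)"

lemma charpoly_eq_det: "charpoly X = det (poly_var_matrix - poly_matrix X)"
  unfolding charpoly_def poly_var_matrix_def poly_matrix_def
  by (rule arg_cong[where f=det]) (simp add: vec_eq_iff)

lemma poly_matrix_mult: "poly_matrix (A ** B) = poly_matrix A ** poly_matrix (B :: complex^'k^'n)"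
  by (simp add: vec_eq_iff poly_matrix_def matrix_matrix_mult_def sum_to_poly mult.commute)

lemma poly_matrix_mat1: "poly_matrix (mat 1 :: complex^'n^'n) = mat 1"
  by (auto simp: vec_eq_iff poly_matrix_def mat_def)

lemma poly_var_matrix_commute: "poly_matrix U ** poly_var_matrix = poly_var_matrix ** poly_matrix (U :: complex^'n^'n)"
proof -
  have "(poly_matrix U ** poly_var_matrix) $ i $ j = (poly_var_matrix ** poly_matrix U) $ i $ j" for i j
  proof -
    have "(poly_matrix U ** poly_var_matrix) $ i $ j = [:U $ i $ j:] * [:0, 1:]"
      unfolding matrix_matrix_mult_component
      by (simp add: poly_matrix_def poly_var_matrix_def if_distrib if_distribR cong: if_cong)
    also have "\<dots> = (poly_var_matrix ** poly_matrix U) $ i $ j"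
      unfolding matrix_matrix_mult_component
      by (simp add: poly_matrix_def poly_var_matrix_def if_distrib if_distribR mult.commute cong: if_cong)
    finally show ?thesis .
  qed
  thus ?thesis by (simp add: vec_eq_iff)
qed

lemma charpoly_unitary_conj_diagm:
  assumes "unitary U"
  shows "charpoly (U ** diagm d ** adj U) = (\<Prod>i\<in>UNIV. [:- of_real (d $ i), 1:])"
proof -
  have UU: "U ** adj U = mat 1" using assms by (simp add: unitary_def)
  have "poly_matrix U ** poly_var_matrix ** poly_matrix (adj U) = poly_var_matrix"
    by (simp add: poly_var_matrix_commute flip: matrix_mul_assoc poly_matrix_mult)
      (simp add: UU poly_matrix_mat1)
  hence eq: "poly_var_matrix - poly_matrix (U ** diagm d ** adj U)
      = poly_matrix U ** (poly_var_matrix - poly_matrix (diagm d)) ** poly_matrix (adj U)"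
    by (simp add: matrix_diff_ldistrib matrix_diff_rdistrib poly_matrix_mult)
  have "det (poly_matrix U) * det (poly_matrix (adj U)) = 1"
    by (simp add: det_mul[symmetric] poly_matrix_mult[symmetric] UU poly_matrix_mat1)
  hence "charpoly (U ** diagm d ** adj U) = det (poly_var_matrix - poly_matrix (diagm d))"
    unfolding charpoly_eq_det eq det_mul by (simp add: algebra_simps)
  also have "\<dots> = (\<Prod>i\<in>UNIV. (poly_var_matrix - poly_matrix (diagm d)) $ i $ i)"
    by (rule det_diagonal) (simp add: poly_var_matrix_def poly_matrix_def)
  also have "\<dots> = (\<Prod>i\<in>UNIV. [:- of_real (d $ i), 1:])"
    by (simp add: poly_var_matrix_def poly_matrix_def)
  finally show ?thesis .
qed

lemma order_prod_linear_factors: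
  fixes c :: "'i \<Rightarrow> complex"
  assumes "finite A"
  shows "order a (\<Prod>i\<in>A. [:- c i, 1:]) = card {i\<in>A. c i = a}"
  using assms
proof (induction A rule: finite_induct)
  case empty
  then show ?case by simp
next
  case (insert x F)
  have "(\<Prod>i\<in>F. [:- c i, 1:]) \<noteq> 0" using insert.hyps(1) by (simp add: prod_zero_iff)
  hence "order a ([:- c x, 1:] * (\<Prod>i\<in>F. [:- c i, 1:]))
      = order a [:- c x, 1:] + order a (\<Prod>i\<in>F. [:- c i, 1:])"
    using mult_eq_0_iff[of "[:- c x, 1:]"] by (intro order_mult) auto
  hence "order a (\<Prod>i\<in>insert x F. [:- c i, 1:]) = order a [:- c x, 1:] + order a (\<Prod>i\<in>F. [:- c i, 1:])"
    using insert.hyps by simp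
  moreover have "order a [:- c x, 1:] = (if c x = a then 1 else 0)"
    using order_power_n_n[of a 1] by (auto intro: order_0I[THEN trans])
  moreover have "{i\<in>insert x F. c i = a} = (if c x = a then insert x {i\<in>F. c i = a} else {i\<in>F. c i = a})"
    by auto
  ultimately show ?case using insert by simp
qed

lemma eigvals_unitary_conj_diagm_sorted:
  fixes d :: "real^'n::{finite,linorder}"
  assumes "unitary U" and "sorted_desc d"
  shows "eigvals (U ** diagm d ** adj U) = d"
proof -
  have counts: "order a (charpoly (U ** diagm d ** adj U)) = card {i. complex_of_real (d $ i) = a}" for a
    using order_prod_linear_factors[of UNIV a "\<lambda>i. of_real (d $ i)"]
    by (simp add: charpoly_unitary_conj_diagm[OF assms(1)])
  show ?thesis unfolding eigvals_def
  proof (rule the_equality)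
    fix e :: "real^'n::{finite,linorder}"
    assume e: "(\<forall>i j. i \<le> j \<longrightarrow> e $ j \<le> e $ i) \<and>
      (\<forall>a. card {i. complex_of_real (e $ i) = a} = order a (charpoly (U ** diagm d ** adj U)))"
    show "e = d"
    proof (rule sorted_desc_eqI)
      show "sorted_desc e" using e by (simp add: sorted_desc_def)
      fix x :: real
      have "card {i. e $ i = x} = card {i. complex_of_real (e $ i) = of_real x}" by simp
      also have "\<dots> = card {i. complex_of_real (d $ i) = of_real x}" using e counts by metis
      also have "\<dots> = card {i. d $ i = x}" by simp
      finally show "card {i. e $ i = x} = card {i. d $ i = x}" .
    qed fact
  qed (use assms(2) counts in \<open>simp add: sorted_desc_def\<close>)
qed

lemma eigvals_unitary_conj_diagm:
  assumes "unitary U"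
  shows "\<exists>p. p permutes UNIV \<and> sorted_desc (permute_vec p d) \<and> eigvals (U ** diagm d ** adj U) = permute_vec p d"
proof -
  obtain p where p: "p permutes UNIV" "sorted_desc (permute_vec p d)"
    using exists_sorting_permutation by blast
  have "U ** diagm d ** adj U = (U ** perm_matrix p) ** diagm (permute_vec p d) ** adj (U ** perm_matrix p)"
    by (rule unitary_conj_diagm_permute[OF p(1)])
  also have "eigvals \<dots> = permute_vec p d"
    by (rule eigvals_unitary_conj_diagm_sorted[OF unitary_mult[OF assms unitary_perm_matrix[OF p(1)]] p(2)])
  finally show ?thesis using p by blast
qed

lemma symmetric_fun_eigvals_unitary_conj_diagm:
  assumes "symmetric_fun f" "unitary U"
  shows "f (eigvals (U ** diagm d ** adj U)) = f d"
  using eigvals_unitary_conj_diagm[OF assms(2), of d] symmetric_fun_permute_vec[OF assms(1)] by metis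

theorem hermitian_eigen_decomposition:
  assumes "hermitian X"
  shows "\<exists>U. unitary U \<and> X = U ** diagm (eigvals X) ** adj U"
proof -
  obtain U d where U: "unitary U" and X: "X = U ** diagm d ** adj U"
    using hermitian_unitary_diagonalisation[OF assms] by blast
  obtain p where p: "p permutes UNIV" "sorted_desc (permute_vec p d)"
    using exists_sorting_permutation by blast
  have X': "X = (U ** perm_matrix p) ** diagm (permute_vec p d) ** adj (U ** perm_matrix p)"
    using X unitary_conj_diagm_permute[OF p(1)] by simp
  have U': "unitary (U ** perm_matrix p)" by (rule unitary_mult[OF U unitary_perm_matrix[OF p(1)]])
  have "eigvals X = permute_vec p d" using X' eigvals_unitary_conj_diagm_sorted[OF U' p(2)] by simp
  thus ?thesis using X' U' by metis
qed

lemma sorted_desc_eigvals: "hermitian X \<Longrightarrow> sorted_desc (eigvals X)"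
  by (metis eigvals_unitary_conj_diagm hermitian_unitary_diagonalisation)


section \<open>The Hoffman--Wielandt inequality\<close>

definition doubly_stochastic :: "real^'n^'n \<Rightarrow> bool" where
  "doubly_stochastic M \<longleftrightarrow> (\<forall>i j. 0 \<le> M $ i $ j)
     \<and> (\<forall>i. (\<Sum>j\<in>UNIV. M $ i $ j) = 1) \<and> (\<forall>j. (\<Sum>i\<in>UNIV. M $ i $ j) = 1)"

definition bilinear_pairing :: "real^'n^'n \<Rightarrow> real^'n \<Rightarrow> real^'n \<Rightarrow> real" where
  "bilinear_pairing M a b = (\<Sum>i\<in>UNIV. \<Sum>j\<in>UNIV. M $ i $ j * a $ i * b $ j)"

definition unit_matrix :: "'n \<Rightarrow> 'n \<Rightarrow> real^'n^'n" where
  "unit_matrix r s = (\<chi> x y. if x = r \<and> y = s then 1 else 0)"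

lemma unit_matrix_row_sum: "(\<Sum>y\<in>UNIV. unit_matrix r s $ x $ y) = (if x = r then 1 else 0)"
  by (simp add: unit_matrix_def)

lemma unit_matrix_column_sum: "(\<Sum>x\<in>UNIV. unit_matrix r s $ x $ y) = (if y = s then 1 else 0)"
  by (simp add: unit_matrix_def conj_commute)

lemma trace_unit_matrix: "trace (unit_matrix r s) = (if r = s then 1 else 0)"
proof -
  have "unit_matrix r s $ i $ i = (if i = r then if r = s then 1 else 0 else 0)" for i
    by (simp add: unit_matrix_def)
  thus ?thesis by (simp add: trace_def)
qed

lemma bilinear_pairing_unit_matrix: "bilinear_pairing (unit_matrix r s) a b = a $ r * b $ s"
proof -
  have "unit_matrix r s $ i $ j * a $ i * b $ j = (if j = s then if i = r then a $ r * b $ s else 0 else 0)"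
    for i j by (simp add: unit_matrix_def)
  thus ?thesis by (simp add: bilinear_pairing_def)
qed

lemma bilinear_pairing_add: "bilinear_pairing (M + N) a b = bilinear_pairing M a b + bilinear_pairing N a b"
  by (simp add: bilinear_pairing_def sum.distrib algebra_simps)

lemma bilinear_pairing_diff: "bilinear_pairing (M - N) a b = bilinear_pairing M a b - bilinear_pairing N a b"
  by (simp add: bilinear_pairing_def sum_subtractf algebra_simps)

lemma bilinear_pairing_scaleR: "bilinear_pairing (c *\<^sub>R M) a b = c * bilinear_pairing M a b"
  by (simp add: bilinear_pairing_def sum_distrib_left algebra_simps)

lemma bilinear_pairing_mat1: "bilinear_pairing (mat 1) a b = (\<Sum>i\<in>UNIV. a $ i * b $ i)"
proof -
  have "bilinear_pairing (mat 1) a b = (\<Sum>i\<in>UNIV. \<Sum>j\<in>UNIV. if j = i then a $ i * b $ j else 0)"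
    unfolding bilinear_pairing_def mat_def by (intro sum.cong) auto
  thus ?thesis by simp
qed

lemma doubly_stochastic_abs_sq_unitary:
  assumes "unitary W"
  shows "doubly_stochastic (\<chi> i j. (cmod (W $ i $ j))\<^sup>2)"
  using unitary_row_norms[OF assms] unitary_column_norms[OF assms]
  by (simp add: doubly_stochastic_def)

lemma doubly_stochastic_row_zero:
  assumes "doubly_stochastic M" "M $ k $ k = 1" "l \<noteq> k"
  shows "M $ k $ l = 0"
proof -
  have "(\<Sum>l\<in>UNIV. M $ k $ l) = M $ k $ k + (\<Sum>l\<in>UNIV - {k}. M $ k $ l)"
    by (simp add: sum.remove)
  hence "1 = M $ k $ k + (\<Sum>l\<in>UNIV - {k}. M $ k $ l)"
    using assms(1) by (simp add: doubly_stochastic_def)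
  moreover have "M $ k $ l \<le> (\<Sum>l\<in>UNIV - {k}. M $ k $ l)"
    using assms(1,3) by (intro member_le_sum) (auto simp: doubly_stochastic_def)
  moreover have "0 \<le> M $ k $ l" using assms(1) by (simp add: doubly_stochastic_def)
  ultimately show ?thesis using assms(2) by linarith
qed

lemma doubly_stochastic_column_zero:
  assumes "doubly_stochastic M" "M $ k $ k = 1" "l \<noteq> k"
  shows "M $ l $ k = 0"
proof -
  have "(\<Sum>l\<in>UNIV. M $ l $ k) = M $ k $ k + (\<Sum>l\<in>UNIV - {k}. M $ l $ k)"
    by (simp add: sum.remove)
  hence "1 = M $ k $ k + (\<Sum>l\<in>UNIV - {k}. M $ l $ k)"
    using assms(1) by (simp add: doubly_stochastic_def)
  moreover have "M $ l $ k \<le> (\<Sum>l\<in>UNIV - {k}. M $ l $ k)"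
    using assms(1,3) by (intro member_le_sum) (auto simp: doubly_stochastic_def)
  moreover have "0 \<le> M $ l $ k" using assms(1) by (simp add: doubly_stochastic_def)
  ultimately show ?thesis using assms(2) by linarith
qed

lemma compact_doubly_stochastic: "compact {M :: real^'n^'n. doubly_stochastic M}"
proof -
  have "closed {M :: real^'n^'n. doubly_stochastic M}"
    unfolding doubly_stochastic_def
    by (intro closed_Collect_conj closed_Collect_all closed_Collect_le closed_Collect_eq continuous_intros)
  moreover have "norm M \<le> real CARD('n)" if "doubly_stochastic (M :: real^'n^'n)" for M
  proof -
    have "norm (M $ i) \<le> 1" for i
    proof -
      have "norm (M $ i) \<le> (\<Sum>j\<in>UNIV. norm (M $ i $ j))"
        unfolding norm_vec_def by (rule L2_set_le_sum) simp
      also have "\<dots> = 1" using that by (simp add: doubly_stochastic_def)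
      finally show ?thesis .
    qed
    hence "(\<Sum>i\<in>UNIV. norm (M $ i)) \<le> real CARD('n)"
      using sum_mono[of UNIV "\<lambda>i. norm (M $ i)" "\<lambda>_. 1"] by simp
    moreover have "norm M \<le> (\<Sum>i\<in>UNIV. norm (M $ i))"
      unfolding norm_vec_def by (rule L2_set_le_sum) simp
    ultimately show ?thesis by linarith
  qed
  hence "bounded {M :: real^'n^'n. doubly_stochastic M}" unfolding bounded_iff by blast
  ultimately show ?thesis by (simp add: compact_eq_bounded_closed)
qed

lemma doubly_stochastic_add:
  assumes "doubly_stochastic M" "\<And>i j. 0 \<le> M $ i $ j + E $ i $ j"
    and "\<And>i. (\<Sum>j\<in>UNIV. E $ i $ j) = 0" "\<And>j. (\<Sum>i\<in>UNIV. E $ i $ j) = 0"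
  shows "doubly_stochastic (M + E)"
  using assms by (simp add: doubly_stochastic_def sum.distrib)

text \<open>Rows and columns before i are those of the identity, so the mass missing from row i and from
  column i sits strictly after i.\<close>
lemma doubly_stochastic_first_defect:
  fixes M :: "real^'n::{finite,linorder}^'n::{finite,linorder}"
  assumes M: "doubly_stochastic M" and i: "M $ i $ i \<noteq> 1" and before: "\<And>l. l < i \<Longrightarrow> M $ l $ l = 1"
  shows "\<exists>j k. i < j \<and> i < k \<and> 0 < M $ i $ j \<and> 0 < M $ k $ i"
proof -
  have "M $ i $ i \<le> 1"
    using M member_le_sum[of i UNIV "\<lambda>j. M $ i $ j"] by (auto simp: doubly_stochastic_def)
  hence less: "M $ i $ i < 1" using i by simp
  have "(\<Sum>j\<in>UNIV. M $ i $ j) = M $ i $ i + (\<Sum>j\<in>UNIV - {i}. M $ i $ j)"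
    by (simp add: sum.remove)
  hence "0 < (\<Sum>j\<in>UNIV - {i}. M $ i $ j)" using M less by (simp add: doubly_stochastic_def)
  then obtain j where j: "j \<noteq> i" "0 < M $ i $ j"
    by (metis DiffD2 insertI1 not_le sum_nonpos)
  have "(\<Sum>k\<in>UNIV. M $ k $ i) = M $ i $ i + (\<Sum>k\<in>UNIV - {i}. M $ k $ i)"
    by (simp add: sum.remove)
  hence "0 < (\<Sum>k\<in>UNIV - {i}. M $ k $ i)" using M less by (simp add: doubly_stochastic_def)
  then obtain k where k: "k \<noteq> i" "0 < M $ k $ i"
    by (metis DiffD2 insertI1 not_le sum_nonpos)
  have "i < j"
    using j doubly_stochastic_column_zero[OF M before[of j]] by (metis less_linear less_irrefl)
  moreover have "i < k"
    using k doubly_stochastic_row_zero[OF M before[of k]] by (metis less_linear less_irrefl)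
  ultimately show ?thesis using j k by blast
qed

text \<open>Moving mass \<epsilon> from (i,j) and (k,i) to (i,i) and (k,j) keeps M doubly stochastic, raises
  the trace, and does not decrease the pairing with sorted vectors, which grows by
  \<open>\<epsilon> (a\<^sub>i - a\<^sub>k) (b\<^sub>i - b\<^sub>j)\<close>.\<close>
lemma doubly_stochastic_exchange:
  fixes M :: "real^'n::{finite,linorder}^'n::{finite,linorder}"
  assumes M: "doubly_stochastic M" and sorted: "sorted_desc a" "sorted_desc b"
    and ij: "i < j" and ik: "i < k" and pos: "0 < M $ i $ j" "0 < M $ k $ i"
  shows "\<exists>N. doubly_stochastic N \<and> bilinear_pairing M a b \<le> bilinear_pairing N a b \<and> trace M < trace N"
proof -
  define E where "E = unit_matrix i i - unit_matrix i j - unit_matrix k i + unit_matrix k j"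
  define \<epsilon> where "\<epsilon> = min (M $ i $ j) (M $ k $ i)"
  have \<epsilon>: "\<epsilon> > 0" using pos by (simp add: \<epsilon>_def)
  define N where "N = M + \<epsilon> *\<^sub>R E"
  have E_entry: "E $ x $ y = (if x = i \<and> y = i then 1 else 0) - (if x = i \<and> y = j then 1 else 0)
      - (if x = k \<and> y = i then 1 else 0) + (if x = k \<and> y = j then 1 else 0)" for x y
    by (simp add: E_def unit_matrix_def)
  have E_ij: "E $ i $ j = -1" and E_ki: "E $ k $ i = -1"
    using ij ik by (auto simp: E_entry)
  have "doubly_stochastic N"
    unfolding N_def
  proof (rule doubly_stochastic_add[OF M])
    fix x y
    have "(x = i \<and> y = j) \<or> (x = k \<and> y = i) \<or> 0 \<le> E $ x $ y"
      by (auto simp: E_entry)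
    moreover have "0 \<le> M $ x $ y" using M by (simp add: doubly_stochastic_def)
    ultimately show "0 \<le> M $ x $ y + (\<epsilon> *\<^sub>R E) $ x $ y"
      using \<epsilon> E_ij E_ki by (auto simp: \<epsilon>_def)
    show "(\<Sum>y\<in>UNIV. (\<epsilon> *\<^sub>R E) $ x $ y) = 0"
      by (simp add: E_def sum.distrib sum_subtractf unit_matrix_row_sum flip: sum_distrib_left)
    show "(\<Sum>x\<in>UNIV. (\<epsilon> *\<^sub>R E) $ x $ y) = 0"
      by (simp add: E_def sum.distrib sum_subtractf unit_matrix_column_sum flip: sum_distrib_left)
  qed
  moreover have "bilinear_pairing M a b \<le> bilinear_pairing N a b"
  proof -
    have "bilinear_pairing E a b = (a $ i - a $ k) * (b $ i - b $ j)"
      by (simp add: E_def bilinear_pairing_add bilinear_pairing_diff bilinear_pairing_unit_matrix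
          algebra_simps)
    moreover have "0 \<le> (a $ i - a $ k) * (b $ i - b $ j)"
      using sorted ij ik by (simp add: sorted_desc_def less_imp_le)
    ultimately show ?thesis using \<epsilon> by (simp add: N_def bilinear_pairing_add bilinear_pairing_scaleR)
  qed
  moreover have "trace M < trace N"
  proof -
    have "trace E = 1 + (if k = j then 1 else 0)"
      using ij ik by (auto simp: E_def trace_add trace_sub trace_unit_matrix)
    moreover have "trace N = trace M + \<epsilon> * trace E"
      unfolding N_def trace_def by (simp add: sum.distrib sum_distrib_left)
    ultimately show ?thesis using \<epsilon> by simp
  qed
  ultimately show ?thesis by blast
qed

text \<open>Among the doubly stochastic matrices whose pairing is at least that of S, one of maximal
  trace exists by compactness; by the exchange step it must be the identity.\<close>
lemma doubly_stochastic_pairing_le: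
  fixes S :: "real^'n::{finite,linorder}^'n::{finite,linorder}"
  assumes S: "doubly_stochastic S" and sorted: "sorted_desc a" "sorted_desc b"
  shows "bilinear_pairing S a b \<le> (\<Sum>i\<in>UNIV. a $ i * b $ i)"
proof -
  define T where "T = {M. doubly_stochastic M} \<inter> {M. bilinear_pairing S a b \<le> bilinear_pairing M a b}"
  have "closed {M :: real^'n::{finite,linorder}^'n::{finite,linorder}. bilinear_pairing S a b \<le> bilinear_pairing M a b}"
    unfolding bilinear_pairing_def by (intro closed_Collect_le continuous_intros)
  hence "compact T" unfolding T_def by (intro compact_Int_closed compact_doubly_stochastic)
  moreover have "T \<noteq> {}" using S by (auto simp: T_def)
  moreover have "continuous_on T trace" unfolding trace_def by (intro continuous_intros)
  ultimately obtain M where MT: "M \<in> T" and M_max: "\<forall>N\<in>T. trace N \<le> trace M"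
    using continuous_attains_sup by blast
  have M: "doubly_stochastic M" using MT by (simp add: T_def)
  have diag: "M $ i $ i = 1" for i
  proof (rule ccontr)
    assume "M $ i $ i \<noteq> 1"
    hence ne: "{i. M $ i $ i \<noteq> 1} \<noteq> {}" by auto
    define i0 where "i0 = Min {i. M $ i $ i \<noteq> 1}"
    have "M $ i0 $ i0 \<noteq> 1" using Min_in[OF _ ne] by (simp add: i0_def)
    moreover have "M $ l $ l = 1" if "l < i0" for l
    proof (rule ccontr)
      assume "M $ l $ l \<noteq> 1"
      hence "i0 \<le> l" unfolding i0_def by (intro Min_le) auto
      thus False using that by simp
    qed
    ultimately obtain j k where "i0 < j" "i0 < k" "0 < M $ i0 $ j" "0 < M $ k $ i0"
      using doubly_stochastic_first_defect[OF M] by blast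
    then obtain N where "doubly_stochastic N" "bilinear_pairing M a b \<le> bilinear_pairing N a b"
      "trace M < trace N"
      using doubly_stochastic_exchange[OF M sorted] by blast
    thus False using MT M_max by (force simp: T_def)
  qed
  have "M = mat 1"
    using doubly_stochastic_row_zero[OF M diag] diag by (auto simp: vec_eq_iff mat_def)
  thus ?thesis using MT by (simp add: T_def bilinear_pairing_mat1)
qed

lemma hoffman_wielandt_diagm:
  fixes a b :: "real^'n::{finite,linorder}" and W :: "complex^'n::{finite,linorder}^'n::{finite,linorder}"
  assumes W: "unitary W" and sorted: "sorted_desc a" "sorted_desc b"
  shows "norm (a - b) \<le> norm (diagm a ** W - W ** diagm b)"
proof -
  define S :: "real^'n::{finite,linorder}^'n::{finite,linorder}" where "S = (\<chi> i j. (cmod (W $ i $ j))\<^sup>2)"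
  have S: "doubly_stochastic S" unfolding S_def by (rule doubly_stochastic_abs_sq_unitary[OF W])
  have "(norm (diagm a ** W - W ** diagm b))\<^sup>2 = (\<Sum>i\<in>UNIV. \<Sum>j\<in>UNIV. S $ i $ j * (a $ i - b $ j)\<^sup>2)"
    unfolding norm_matrix_sq
  proof (intro sum.cong refl)
    fix i j
    have "(diagm a ** W - W ** diagm b) $ i $ j = W $ i $ j * of_real (a $ i - b $ j)"
      by (simp add: diagm_matrix_mult_component matrix_mult_diagm_component algebra_simps)
    thus "(cmod ((diagm a ** W - W ** diagm b) $ i $ j))\<^sup>2 = S $ i $ j * (a $ i - b $ j)\<^sup>2"
      by (simp add: S_def norm_mult power_mult_distrib del: of_real_diff)
  qed
  also have "\<dots> = (\<Sum>i\<in>UNIV. \<Sum>j\<in>UNIV. S $ i $ j * (a $ i)\<^sup>2) + (\<Sum>i\<in>UNIV. \<Sum>j\<in>UNIV. S $ i $ j * (b $ j)\<^sup>2)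
      - 2 * bilinear_pairing S a b"
    by (simp add: bilinear_pairing_def power2_diff algebra_simps sum.distrib sum_subtractf sum_distrib_left)
  also have "(\<Sum>i\<in>UNIV. \<Sum>j\<in>UNIV. S $ i $ j * (a $ i)\<^sup>2) = (\<Sum>i\<in>UNIV. (a $ i)\<^sup>2)"
    using S by (simp add: doubly_stochastic_def flip: sum_distrib_right)
  also have "(\<Sum>i\<in>UNIV. \<Sum>j\<in>UNIV. S $ i $ j * (b $ j)\<^sup>2) = (\<Sum>j\<in>UNIV. (b $ j)\<^sup>2)"
    using S by (subst sum.swap) (simp add: doubly_stochastic_def flip: sum_distrib_right)
  finally have "(norm (diagm a ** W - W ** diagm b))\<^sup>2
      = (\<Sum>i\<in>UNIV. (a $ i)\<^sup>2) + (\<Sum>j\<in>UNIV. (b $ j)\<^sup>2) - 2 * bilinear_pairing S a b" .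
  moreover have "(norm (a - b))\<^sup>2 = (\<Sum>i\<in>UNIV. (a $ i - b $ i)\<^sup>2)"
    by (simp add: norm_vec_def L2_set_def sum_nonneg)
  hence "(norm (a - b))\<^sup>2 = (\<Sum>i\<in>UNIV. (a $ i)\<^sup>2) + (\<Sum>j\<in>UNIV. (b $ j)\<^sup>2) - 2 * (\<Sum>i\<in>UNIV. a $ i * b $ i)"
    by (simp add: power2_diff sum.distrib sum_subtractf sum_distrib_left algebra_simps)
  ultimately have "(norm (a - b))\<^sup>2 \<le> (norm (diagm a ** W - W ** diagm b))\<^sup>2"
    using doubly_stochastic_pairing_le[OF S sorted] by simp
  thus ?thesis by (rule power2_le_imp_le) simp
qed

theorem hoffman_wielandt:
  fixes A B :: "complex^'n::{finite,linorder}^'n::{finite,linorder}"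
  assumes "hermitian A" "hermitian B"
  shows "norm (eigvals A - eigvals B) \<le> norm (A - B)"
proof -
  obtain U where U: "unitary U" and A: "A = U ** diagm (eigvals A) ** adj U"
    using hermitian_eigen_decomposition[OF assms(1)] by blast
  obtain V where V: "unitary V" and B: "B = V ** diagm (eigvals B) ** adj V"
    using hermitian_eigen_decomposition[OF assms(2)] by blast
  have UU: "adj U ** U = mat 1" and VV: "adj V ** V = mat 1" using U V by (auto simp: unitary_def)
  have "adj U ** A ** V = diagm (eigvals A) ** (adj U ** V)"
    by (subst A) (simp add: matrix_mul_assoc UU)
  moreover have "adj U ** B ** V = (adj U ** V) ** diagm (eigvals B)"
    by (subst B) (simp add: VV flip: matrix_mul_assoc)
  ultimately have "adj U ** (A - B) ** V = diagm (eigvals A) ** (adj U ** V) - (adj U ** V) ** diagm (eigvals B)"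
    by (simp add: matrix_diff_ldistrib matrix_diff_rdistrib)
  moreover have "norm (adj U ** (A - B) ** V) = norm (A - B)"
    by (simp add: norm_unitary_mult_left norm_unitary_mult_right unitary_adj U V)
  ultimately show ?thesis
    using hoffman_wielandt_diagm[OF unitary_mult[OF unitary_adj[OF U] V]
        sorted_desc_eigvals[OF assms(1)] sorted_desc_eigvals[OF assms(2)]] by simp
qed


section \<open>Quadratic envelopes and proximal maps\<close>

lemma norm_midpoint_diff_sq:
  fixes a b y :: "'a::real_inner"
  shows "(norm ((1/2) *\<^sub>R (a + b) - y))\<^sup>2
     = (norm (a - y))\<^sup>2 / 2 + (norm (b - y))\<^sup>2 / 2 - (norm (a - b))\<^sup>2 / 4"
  by (simp add: power2_norm_eq_inner inner_diff_left inner_diff_right inner_add_left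
      inner_add_right inner_commute algebra_simps) (simp add: field_simps)

lemma ereal_quadratic_antimono:
  fixes s t :: real
  assumes "\<gamma> \<ge> 0" "0 \<le> s" "s \<le> t"
  shows "ereal (\<alpha> - \<gamma> / 2 * t\<^sup>2) \<le> ereal (\<alpha> - \<gamma> / 2 * s\<^sup>2)"
proof -
  have "s\<^sup>2 \<le> t\<^sup>2" using assms(2,3) by (intro power_mono)
  thus ?thesis using assms(1) by (simp add: mult_left_mono)
qed

lemma qenv_ge_minorant:
  assumes "y \<in> S" "\<forall>z\<in>S. ereal (\<alpha> - \<gamma> / 2 * (norm (z - y))\<^sup>2) \<le> g z"
  shows "ereal (\<alpha> - \<gamma> / 2 * (norm (x - y))\<^sup>2) \<le> qenv S \<gamma> g x"
  unfolding qenv_def by (rule Sup_upper) (use assms in blast)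

lemma qenv_le: assumes "x \<in> S" shows "qenv S \<gamma> g x \<le> g x"
  unfolding qenv_def using assms by (auto intro!: Sup_least)

lemma qenv_nonneg:
  assumes "x \<in> S" "\<forall>z\<in>S. 0 \<le> g z" "\<gamma> \<ge> 0"
  shows "0 \<le> qenv S \<gamma> g x"
proof -
  have "ereal (0 - \<gamma> / 2 * (norm (z - x))\<^sup>2) \<le> g z" if "z \<in> S" for z
    using assms(2,3) that order_trans[of _ 0 "g z"] by (simp add: zero_ereal_def)
  thus ?thesis using qenv_ge_minorant[OF assms(1), of 0 \<gamma> g x] by (simp add: zero_ereal_def)
qed

lemma qenv_le_qenvI:
  assumes "\<gamma> \<ge> 0"
    and match: "\<And>\<alpha> Y. Y \<in> S \<Longrightarrow> \<forall>z\<in>S. ereal (\<alpha> - \<gamma> / 2 * (norm (z - Y))\<^sup>2) \<le> g z \<Longrightarrow>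
       \<exists>Y'\<in>T. (\<forall>z\<in>T. ereal (\<alpha> - \<gamma> / 2 * (norm (z - Y'))\<^sup>2) \<le> h z) \<and> norm (y - Y') \<le> norm (x - Y)"
  shows "qenv S \<gamma> g x \<le> qenv T \<gamma> h y"
  unfolding qenv_def[of S]
proof (rule Sup_least, clarify)
  fix \<alpha> Y assume "Y \<in> S" "\<forall>z\<in>S. ereal (\<alpha> - \<gamma> / 2 * (norm (z - Y))\<^sup>2) \<le> g z"
  then obtain Y' where Y': "Y' \<in> T" "\<forall>z\<in>T. ereal (\<alpha> - \<gamma> / 2 * (norm (z - Y'))\<^sup>2) \<le> h z"
    and closer: "norm (y - Y') \<le> norm (x - Y)"
    using match by blast
  have "ereal (\<alpha> - \<gamma> / 2 * (norm (x - Y))\<^sup>2) \<le> ereal (\<alpha> - \<gamma> / 2 * (norm (y - Y'))\<^sup>2)"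
    by (rule ereal_quadratic_antimono[OF assms(1) norm_ge_zero closer])
  also have "\<dots> \<le> qenv T \<gamma> h y" by (rule qenv_ge_minorant[OF Y'])
  finally show "ereal (\<alpha> - \<gamma> / 2 * (norm (x - Y))\<^sup>2) \<le> qenv T \<gamma> h y" .
qed

lemma qenv_midpoint_le:
  fixes S :: "'a::real_inner set"
  assumes "qenv S \<gamma> g a = ereal qa" "qenv S \<gamma> g b = ereal qb"
  shows "qenv S \<gamma> g ((1/2) *\<^sub>R (a + b)) \<le> ereal (qa / 2 + qb / 2 + \<gamma> / 8 * (norm (a - b))\<^sup>2)"
  unfolding qenv_def[of S \<gamma> g "(1/2) *\<^sub>R (a + b)"]
proof (rule Sup_least, clarify)
  fix \<alpha> y assume y: "y \<in> S" and minorant: "\<forall>z\<in>S. ereal (\<alpha> - \<gamma> / 2 * (norm (z - y))\<^sup>2) \<le> g z"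
  have "\<alpha> - \<gamma> / 2 * (norm (a - y))\<^sup>2 \<le> qa"
    using qenv_ge_minorant[OF y minorant, of a] assms(1) by simp
  moreover have "\<alpha> - \<gamma> / 2 * (norm (b - y))\<^sup>2 \<le> qb"
    using qenv_ge_minorant[OF y minorant, of b] assms(2) by simp
  ultimately have "(\<alpha> - \<gamma> / 2 * (norm (a - y))\<^sup>2) / 2 + (\<alpha> - \<gamma> / 2 * (norm (b - y))\<^sup>2) / 2
        + \<gamma> / 8 * (norm (a - b))\<^sup>2 \<le> qa / 2 + qb / 2 + \<gamma> / 8 * (norm (a - b))\<^sup>2"
    by (intro add_mono divide_right_mono order_refl) auto
  also have "(\<alpha> - \<gamma> / 2 * (norm (a - y))\<^sup>2) / 2 + (\<alpha> - \<gamma> / 2 * (norm (b - y))\<^sup>2) / 2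
        + \<gamma> / 8 * (norm (a - b))\<^sup>2 = \<alpha> - \<gamma> / 2 * (norm ((1/2) *\<^sub>R (a + b) - y))\<^sup>2"
    by (simp only: norm_midpoint_diff_sq) (simp add: field_simps)
  finally show "ereal (\<alpha> - \<gamma> / 2 * (norm ((1/2) *\<^sub>R (a + b) - y))\<^sup>2)
      \<le> ereal (qa / 2 + qb / 2 + \<gamma> / 8 * (norm (a - b))\<^sup>2)"
    by simp
qed

definition prox_objective :: "('a::real_normed_vector \<Rightarrow> ereal) \<Rightarrow> real \<Rightarrow> 'a \<Rightarrow> 'a \<Rightarrow> ereal" where
  "prox_objective h \<rho> w v = h v / ereal \<rho> + ereal ((norm (v - w))\<^sup>2 / 2)"

lemma prox_eq_argmin: "prox S h \<rho> w = {v \<in> S. \<forall>u\<in>S. prox_objective h \<rho> w v \<le> prox_objective h \<rho> w u}"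
  by (simp add: prox_def prox_objective_def)

lemma qenv_finite_at_prox:
  assumes v: "v \<in> prox S (qenv S \<gamma> g) \<rho> w" and "\<rho> > 0" "\<gamma> \<ge> 0" "\<forall>z\<in>S. 0 \<le> g z"
    and fin: "\<exists>z\<in>S. qenv S \<gamma> g z < \<infinity>"
  shows "\<exists>q. qenv S \<gamma> g v = ereal q"
proof -
  obtain z where z: "z \<in> S" "qenv S \<gamma> g z < \<infinity>" using fin by blast
  have nonneg: "0 \<le> qenv S \<gamma> g u" if "u \<in> S" for u using qenv_nonneg that assms(3,4) by blast
  have "prox_objective (qenv S \<gamma> g) \<rho> w z < \<infinity>"
    using z nonneg[OF z(1)] \<open>\<rho> > 0\<close> by (cases "qenv S \<gamma> g z") (auto simp: prox_objective_def)
  moreover have "prox_objective (qenv S \<gamma> g) \<rho> w v \<le> prox_objective (qenv S \<gamma> g) \<rho> w z"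
    using v z(1) by (simp add: prox_eq_argmin)
  ultimately have "qenv S \<gamma> g v \<noteq> \<infinity>" using \<open>\<rho> > 0\<close> by (auto simp: prox_objective_def)
  thus ?thesis using v nonneg by (cases "qenv S \<gamma> g v") (auto simp: prox_def)
qed

text \<open>The prox objective is strongly convex along midpoints: by the midpoint estimates for the
  envelope and the squared distance, the objective at the midpoint of two minimisers lies below
  their common value by \<open>(1 - \<gamma>/\<rho>) \<parallel>v\<^sub>1 - v\<^sub>2\<parallel>\<^sup>2 / 8\<close>.\<close>
lemma prox_qenv_unique:
  fixes S :: "'a::real_inner set"
  assumes mid: "\<And>a b. a \<in> S \<Longrightarrow> b \<in> S \<Longrightarrow> (1/2) *\<^sub>R (a + b) \<in> S"
    and nonneg: "\<forall>z\<in>S. 0 \<le> g z" and \<gamma>: "\<gamma> > 0" and \<rho>: "\<rho> > \<gamma>"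
    and fin: "\<exists>z\<in>S. qenv S \<gamma> g z < \<infinity>"
    and v1: "v1 \<in> prox S (qenv S \<gamma> g) \<rho> w" and v2: "v2 \<in> prox S (qenv S \<gamma> g) \<rho> w"
  shows "v1 = v2"
proof -
  let ?Q = "qenv S \<gamma> g" and ?\<Phi> = "prox_objective (qenv S \<gamma> g) \<rho> w"
  have \<rho>0: "\<rho> > 0" using \<gamma> \<rho> by simp
  obtain q1 where q1: "?Q v1 = ereal q1" using qenv_finite_at_prox[OF v1 \<rho>0 _ nonneg fin] \<gamma> by auto
  obtain q2 where q2: "?Q v2 = ereal q2" using qenv_finite_at_prox[OF v2 \<rho>0 _ nonneg fin] \<gamma> by auto
  have v1S: "v1 \<in> S" and v2S: "v2 \<in> S" using v1 v2 by (auto simp: prox_def)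
  define m where "m = (1/2) *\<^sub>R (v1 + v2)"
  define d where "d = (norm (v1 - v2))\<^sup>2"
  have QM: "?Q m \<le> ereal (q1 / 2 + q2 / 2 + \<gamma> / 8 * d)"
    unfolding m_def d_def by (rule qenv_midpoint_le[OF q1 q2])
  obtain qm where qm: "?Q m = ereal qm"
    using QM qenv_nonneg[OF mid[OF v1S v2S] nonneg] \<gamma> by (cases "?Q m") (auto simp: m_def)
  define n1 n2 where "n1 = (norm (v1 - w))\<^sup>2" and "n2 = (norm (v2 - w))\<^sup>2"
  have "(norm (m - w))\<^sup>2 = n1 / 2 + n2 / 2 - d / 4"
    unfolding m_def n1_def n2_def d_def by (rule norm_midpoint_diff_sq)
  hence \<Phi>m: "?\<Phi> m = ereal (qm / \<rho> + (n1 / 2 + n2 / 2 - d / 4) / 2)"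
    using \<rho>0 by (simp add: prox_objective_def qm)
  have \<Phi>1: "?\<Phi> v1 = ereal (q1 / \<rho> + n1 / 2)" and \<Phi>2: "?\<Phi> v2 = ereal (q2 / \<rho> + n2 / 2)"
    using \<rho>0 by (simp_all add: prox_objective_def q1 q2 n1_def n2_def)
  have "?\<Phi> v1 \<le> ?\<Phi> v2" "?\<Phi> v2 \<le> ?\<Phi> v1" "?\<Phi> v1 \<le> ?\<Phi> m"
    using v1 v2 mid[OF v1S v2S] by (auto simp: prox_eq_argmin m_def)
  hence "q1 / \<rho> + n1 / 2 = q2 / \<rho> + n2 / 2"
    and "q1 / \<rho> + n1 / 2 \<le> qm / \<rho> + (n1 / 2 + n2 / 2 - d / 4) / 2"
    by (simp_all only: \<Phi>1 \<Phi>2 \<Phi>m ereal_less_eq order_antisym)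
  moreover have "qm / \<rho> \<le> (q1 / \<rho>) / 2 + (q2 / \<rho>) / 2 + (\<gamma> / \<rho>) * d / 8"
  proof -
    have "qm / \<rho> \<le> (q1 / 2 + q2 / 2 + \<gamma> / 8 * d) / \<rho>"
      using QM qm \<rho>0 by (simp add: divide_right_mono)
    also have "\<dots> = (q1 / \<rho>) / 2 + (q2 / \<rho>) / 2 + (\<gamma> / \<rho>) * d / 8"
      using \<rho>0 by (simp add: field_simps)
    finally show ?thesis .
  qed
  moreover have "\<And>A1 A2 Am c :: real. A1 + n1 / 2 = A2 + n2 / 2 \<Longrightarrow> A1 + n1 / 2 \<le> Am + (n1 / 2 + n2 / 2 - d / 4) / 2
      \<Longrightarrow> Am \<le> A1 / 2 + A2 / 2 + c / 8 \<Longrightarrow> d \<le> c"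
    by (simp add: field_simps)
  ultimately have "d \<le> (\<gamma> / \<rho>) * d" by blast
  hence "(1 - \<gamma> / \<rho>) * d \<le> 0" by (simp add: algebra_simps)
  moreover have "\<gamma> / \<rho> < 1" using \<rho> \<rho>0 by simp
  ultimately have "d = 0" by (simp add: d_def mult_le_0_iff)
  thus ?thesis by (simp add: d_def)
qed

lemma argmin_transfer:
  fixes \<Phi> :: "'a \<Rightarrow> 'c::preorder" and \<phi> :: "'b \<Rightarrow> 'c"
  assumes E: "E ` T \<subseteq> S" and L: "L ` S \<subseteq> T" and agree: "\<And>u. u \<in> T \<Longrightarrow> \<Phi> (E u) = \<phi> u"
    and dominate: "\<And>Z. Z \<in> S \<Longrightarrow> \<phi> (L Z) \<le> \<Phi> Z"
    and unique: "\<And>V W. V \<in> S \<Longrightarrow> W \<in> S \<Longrightarrow> \<forall>Z\<in>S. \<Phi> V \<le> \<Phi> Z \<Longrightarrow> \<forall>Z\<in>S. \<Phi> W \<le> \<Phi> Z \<Longrightarrow> V = W"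
  shows "{V \<in> S. \<forall>Z\<in>S. \<Phi> V \<le> \<Phi> Z} = E ` {v \<in> T. \<forall>u\<in>T. \<phi> v \<le> \<phi> u}"
proof
  show "E ` {v \<in> T. \<forall>u\<in>T. \<phi> v \<le> \<phi> u} \<subseteq> {V \<in> S. \<forall>Z\<in>S. \<Phi> V \<le> \<Phi> Z}"
  proof clarify
    fix v assume v: "v \<in> T" "\<forall>u\<in>T. \<phi> v \<le> \<phi> u"
    have "\<Phi> (E v) \<le> \<Phi> Z" if Z: "Z \<in> S" for Z
    proof -
      have "\<Phi> (E v) = \<phi> v" by (rule agree[OF v(1)])
      also have "\<dots> \<le> \<phi> (L Z)" using v(2) L Z by blast
      also have "\<dots> \<le> \<Phi> Z" by (rule dominate[OF Z])
      finally show ?thesis .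
    qed
    thus "E v \<in> S \<and> (\<forall>Z\<in>S. \<Phi> (E v) \<le> \<Phi> Z)" using E v(1) by blast
  qed
  show "{V \<in> S. \<forall>Z\<in>S. \<Phi> V \<le> \<Phi> Z} \<subseteq> E ` {v \<in> T. \<forall>u\<in>T. \<phi> v \<le> \<phi> u}"
  proof clarify
    fix V assume V: "V \<in> S" "\<forall>Z\<in>S. \<Phi> V \<le> \<Phi> Z"
    have LV: "L V \<in> T" using L V(1) by blast
    have ELV: "E (L V) \<in> S" using E LV by blast
    have min: "\<Phi> (E (L V)) \<le> \<Phi> Z" if "Z \<in> S" for Z
    proof -
      have "\<Phi> (E (L V)) = \<phi> (L V)" by (rule agree[OF LV])
      also have "\<dots> \<le> \<Phi> V" by (rule dominate[OF V(1)])
      also have "\<dots> \<le> \<Phi> Z" using V(2) that by blast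
      finally show ?thesis .
    qed
    have "V = E (L V)" using unique[OF V(1) ELV V(2)] min by blast
    moreover have "\<phi> (L V) \<le> \<phi> u" if "u \<in> T" for u
    proof -
      have "\<phi> (L V) = \<Phi> (E (L V))" by (rule agree[OF LV, symmetric])
      also have "\<dots> \<le> \<Phi> (E u)" using min E that by blast
      also have "\<dots> = \<phi> u" by (rule agree[OF that])
      finally show ?thesis .
    qed
    ultimately show "V \<in> E ` {v \<in> T. \<forall>u\<in>T. \<phi> v \<le> \<phi> u}" using LV by blast
  qed
qed


section \<open>Envelopes and proximal maps of spectral functions\<close>

lemma norm_permute_vec_inv_diff:
  assumes "p permutes UNIV"
  shows "norm (permute_vec (inv p) z - y) = norm (z - permute_vec p y)"
proof -
  have "norm (permute_vec (inv p) z - y) = norm (permute_vec p (permute_vec (inv p) z - y))"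
    by (rule norm_permute_vec[OF assms, symmetric])
  also have "permute_vec p (permute_vec (inv p) z - y) = z - permute_vec p y"
    by (simp add: permute_vec_diff permute_vec_inv(1)[OF assms])
  finally show ?thesis .
qed

lemma qenv_permute_vec_le:
  assumes f: "symmetric_fun f" and p: "p permutes UNIV" and \<gamma>: "\<gamma> \<ge> 0"
  shows "qenv UNIV \<gamma> f (permute_vec p v) \<le> qenv UNIV \<gamma> f v"
proof (rule qenv_le_qenvI[OF \<gamma>])
  fix \<alpha> Y assume minorant: "\<forall>z\<in>UNIV. ereal (\<alpha> - \<gamma> / 2 * (norm (z - Y))\<^sup>2) \<le> f z"
  have dist: "norm (z - permute_vec (inv p) Y) = norm (permute_vec p z - Y)" for z
    by (subst (1 2) norm_minus_commute) (rule norm_permute_vec_inv_diff[OF p])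
  have "ereal (\<alpha> - \<gamma> / 2 * (norm (z - permute_vec (inv p) Y))\<^sup>2) \<le> f z" for z
    using minorant[rule_format, of "permute_vec p z"] by (simp add: dist symmetric_fun_permute_vec[OF f p])
  hence "\<forall>z\<in>UNIV. ereal (\<alpha> - \<gamma> / 2 * (norm (z - permute_vec (inv p) Y))\<^sup>2) \<le> f z"
    by (intro ballI)
  moreover have "norm (v - permute_vec (inv p) Y) \<le> norm (permute_vec p v - Y)" by (simp add: dist)
  ultimately show "\<exists>Y'\<in>UNIV. (\<forall>z\<in>UNIV. ereal (\<alpha> - \<gamma> / 2 * (norm (z - Y'))\<^sup>2) \<le> f z)
      \<and> norm (v - Y') \<le> norm (permute_vec p v - Y)"
    by (intro bexI[where x = "permute_vec (inv p) Y"] conjI UNIV_I)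
qed

lemma qenv_permute_vec:
  assumes "symmetric_fun f" "p permutes UNIV" "\<gamma> \<ge> 0"
  shows "qenv UNIV \<gamma> f (permute_vec p v) = qenv UNIV \<gamma> f v"
proof (rule antisym)
  show "qenv UNIV \<gamma> f (permute_vec p v) \<le> qenv UNIV \<gamma> f v" by (rule qenv_permute_vec_le[OF assms])
  have "qenv UNIV \<gamma> f (permute_vec (inv p) (permute_vec p v)) \<le> qenv UNIV \<gamma> f (permute_vec p v)"
    by (rule qenv_permute_vec_le[OF assms(1) permutes_inv[OF assms(2)] assms(3)])
  thus "qenv UNIV \<gamma> f v \<le> qenv UNIV \<gamma> f (permute_vec p v)" by (simp add: permute_vec_inv[OF assms(2)])
qed

lemma exists_permuted_eigvals_close:
  assumes "hermitian Z" "unitary U"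
  shows "\<exists>p. p permutes UNIV \<and> norm (permute_vec p (eigvals Z) - y) \<le> norm (Z - U ** diagm y ** adj U)"
proof -
  obtain q where q: "q permutes UNIV" and eig: "eigvals (U ** diagm y ** adj U) = permute_vec q y"
    using eigvals_unitary_conj_diagm[OF assms(2)] by blast
  have "norm (permute_vec (inv q) (eigvals Z) - y) = norm (eigvals Z - eigvals (U ** diagm y ** adj U))"
    by (simp add: eig norm_permute_vec_inv_diff[OF q])
  also have "\<dots> \<le> norm (Z - U ** diagm y ** adj U)"
    using unitary_conj_diagm_in_Herm[of U y] by (intro hoffman_wielandt[OF assms(1)]) (simp add: Herm_def)
  finally show ?thesis using permutes_inv[OF q] by blast
qed

lemma qenv_spectral_le:
  fixes f :: "real^'n::{finite,linorder} \<Rightarrow> ereal"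
  assumes f: "symmetric_fun f" and \<gamma>: "\<gamma> \<ge> 0" and X: "X \<in> Herm"
  shows "qenv Herm \<gamma> (\<lambda>X. f (eigvals X)) X \<le> qenv UNIV \<gamma> f (eigvals X)"
proof (rule qenv_le_qenvI[OF \<gamma>])
  fix \<alpha> Y assume Y: "Y \<in> Herm"
    and minorant: "\<forall>Z\<in>Herm. ereal (\<alpha> - \<gamma> / 2 * (norm (Z - Y))\<^sup>2) \<le> f (eigvals Z)"
  obtain V where V: "unitary V" and Y_eq: "Y = V ** diagm (eigvals Y) ** adj V"
    using hermitian_eigen_decomposition Y by (auto simp: Herm_def)
  have "ereal (\<alpha> - \<gamma> / 2 * (norm (z - eigvals Y))\<^sup>2) \<le> f z" for z
  proof -
    have "norm (V ** diagm z ** adj V - Y) = norm (z - eigvals Y)"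
      by (subst Y_eq) (rule norm_unitary_conj_diagm_diff[OF V])
    thus ?thesis using minorant[rule_format, OF unitary_conj_diagm_in_Herm[of V z]]
      by (simp add: symmetric_fun_eigvals_unitary_conj_diagm[OF f V])
  qed
  hence "\<forall>z\<in>UNIV. ereal (\<alpha> - \<gamma> / 2 * (norm (z - eigvals Y))\<^sup>2) \<le> f z" by (intro ballI)
  moreover have "norm (eigvals X - eigvals Y) \<le> norm (X - Y)"
    using X Y by (intro hoffman_wielandt) (simp_all add: Herm_def)
  ultimately show "\<exists>Y'\<in>UNIV. (\<forall>z\<in>UNIV. ereal (\<alpha> - \<gamma> / 2 * (norm (z - Y'))\<^sup>2) \<le> f z)
      \<and> norm (eigvals X - Y') \<le> norm (X - Y)"
    by (intro bexI[where x = "eigvals Y"] conjI UNIV_I)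
qed

lemma qenv_spectral_ge:
  fixes f :: "real^'n::{finite,linorder} \<Rightarrow> ereal"
  assumes f: "symmetric_fun f" and \<gamma>: "\<gamma> \<ge> 0" and X: "X \<in> Herm"
  shows "qenv UNIV \<gamma> f (eigvals X) \<le> qenv Herm \<gamma> (\<lambda>X. f (eigvals X)) X"
proof (rule qenv_le_qenvI[OF \<gamma>])
  obtain U where U: "unitary U" and X_eq: "X = U ** diagm (eigvals X) ** adj U"
    using hermitian_eigen_decomposition X by (auto simp: Herm_def)
  fix \<alpha> y assume minorant: "\<forall>z\<in>UNIV. ereal (\<alpha> - \<gamma> / 2 * (norm (z - y))\<^sup>2) \<le> f z"
  have "ereal (\<alpha> - \<gamma> / 2 * (norm (Z - U ** diagm y ** adj U))\<^sup>2) \<le> f (eigvals Z)"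
    if "Z \<in> Herm" for Z
  proof -
    have "hermitian Z" using that by (simp add: Herm_def)
    then obtain p where p: "p permutes UNIV"
      and close: "norm (permute_vec p (eigvals Z) - y) \<le> norm (Z - U ** diagm y ** adj U)"
      using exists_permuted_eigvals_close[OF _ U] by blast
    have "ereal (\<alpha> - \<gamma> / 2 * (norm (Z - U ** diagm y ** adj U))\<^sup>2)
        \<le> ereal (\<alpha> - \<gamma> / 2 * (norm (permute_vec p (eigvals Z) - y))\<^sup>2)"
      by (rule ereal_quadratic_antimono[OF \<gamma> norm_ge_zero close])
    also have "\<dots> \<le> f (permute_vec p (eigvals Z))" using minorant by blast
    also have "\<dots> = f (eigvals Z)" by (rule symmetric_fun_permute_vec[OF f p])
    finally show ?thesis .
  qed
  hence "\<forall>Z\<in>Herm. ereal (\<alpha> - \<gamma> / 2 * (norm (Z - U ** diagm y ** adj U))\<^sup>2) \<le> f (eigvals Z)"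
    by (intro ballI)
  moreover have "norm (X - U ** diagm y ** adj U) \<le> norm (eigvals X - y)"
    by (subst X_eq) (simp add: norm_unitary_conj_diagm_diff[OF U])
  ultimately show "\<exists>Y'\<in>Herm. (\<forall>Z\<in>Herm. ereal (\<alpha> - \<gamma> / 2 * (norm (Z - Y'))\<^sup>2) \<le> f (eigvals Z))
      \<and> norm (X - Y') \<le> norm (eigvals X - y)"
    by (intro bexI[where x = "U ** diagm y ** adj U"] conjI unitary_conj_diagm_in_Herm)
qed

theorem qenv_spectral:
  fixes f :: "real^'n::{finite,linorder} \<Rightarrow> ereal"
  assumes "symmetric_fun f" "\<gamma> \<ge> 0" "X \<in> Herm"
  shows "qenv Herm \<gamma> (\<lambda>X. f (eigvals X)) X = qenv UNIV \<gamma> f (eigvals X)"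
  using qenv_spectral_le[OF assms] qenv_spectral_ge[OF assms] by (rule antisym)

lemma qenv_spectral_unitary_conj_diagm:
  assumes "symmetric_fun f" "\<gamma> \<ge> 0" "unitary U"
  shows "qenv Herm \<gamma> (\<lambda>X. f (eigvals X)) (U ** diagm u ** adj U) = qenv UNIV \<gamma> f u"
proof -
  obtain p where p: "p permutes UNIV" and eig: "eigvals (U ** diagm u ** adj U) = permute_vec p u"
    using eigvals_unitary_conj_diagm[OF assms(3)] by blast
  have "qenv Herm \<gamma> (\<lambda>X. f (eigvals X)) (U ** diagm u ** adj U) = qenv UNIV \<gamma> f (permute_vec p u)"
    using qenv_spectral[OF assms(1,2) unitary_conj_diagm_in_Herm[of U u]] by (simp add: eig)
  also have "\<dots> = qenv UNIV \<gamma> f u" by (rule qenv_permute_vec[OF assms(1) p assms(2)])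
  finally show ?thesis .
qed

theorem prox_spectral:
  fixes f :: "real^'n::{finite,linorder} \<Rightarrow> ereal"
  assumes f_nonneg: "\<forall>x. 0 \<le> f x" and f: "symmetric_fun f" and \<gamma>: "\<gamma> > 0" and \<rho>: "\<rho> > \<gamma>"
    and finite: "\<exists>x. f x < \<infinity>"
    and X: "X \<in> Herm" and U: "unitary U" and X_eq: "X = U ** diagm (eigvals X) ** adj U"
  shows "prox Herm (qenv Herm \<gamma> (\<lambda>X. f (eigvals X))) \<rho> X
      = (\<lambda>v. U ** diagm v ** adj U) ` prox UNIV (qenv UNIV \<gamma> f) \<rho> (eigvals X)"
proof -
  let ?F = "\<lambda>X. f (eigvals X)"
  let ?\<Phi> = "prox_objective (qenv Herm \<gamma> ?F) \<rho> X" and ?\<phi> = "prox_objective (qenv UNIV \<gamma> f) \<rho> (eigvals X)"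
  have "norm (U ** diagm u ** adj U - X) = norm (u - eigvals X)" for u
  proof -
    define x where "x = eigvals X"
    show ?thesis unfolding x_def[symmetric]
      by (subst X_eq[folded x_def]) (rule norm_unitary_conj_diagm_diff[OF U])
  qed
  hence "?\<Phi> (U ** diagm u ** adj U) = ?\<phi> u" for u
    using qenv_spectral_unitary_conj_diagm[OF f _ U] \<gamma> by (simp add: prox_objective_def)
  moreover have "?\<phi> (eigvals Z) \<le> ?\<Phi> Z" if "Z \<in> Herm" for Z
  proof -
    have "norm (eigvals Z - eigvals X) \<le> norm (Z - X)"
      using hoffman_wielandt that X by (simp add: Herm_def)
    hence "ereal ((norm (eigvals Z - eigvals X))\<^sup>2 / 2) \<le> ereal ((norm (Z - X))\<^sup>2 / 2)"
      by (simp add: power_mono)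
    thus ?thesis using qenv_spectral[OF f _ that] \<gamma> by (simp add: prox_objective_def add_left_mono)
  qed
  moreover have "V = W" if "V \<in> prox Herm (qenv Herm \<gamma> ?F) \<rho> X" "W \<in> prox Herm (qenv Herm \<gamma> ?F) \<rho> X"
    for V W
  proof (rule prox_qenv_unique[OF Herm_midpoint _ \<gamma> \<rho> _ that])
    show "\<forall>z\<in>Herm. 0 \<le> f (eigvals z)" using f_nonneg by simp
    obtain x where "f x < \<infinity>" using finite by blast
    moreover have Herm_diagm: "diagm x \<in> Herm" using unitary_conj_diagm_in_Herm[of "mat 1" x] by simp
    moreover have "qenv Herm \<gamma> ?F (diagm x) \<le> f x"
      using qenv_le[OF Herm_diagm, of \<gamma> ?F] symmetric_fun_eigvals_unitary_conj_diagm[OF f unitary_mat1, of x]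
      by simp
    ultimately show "\<exists>z\<in>Herm. qenv Herm \<gamma> ?F z < \<infinity>" by (blast intro: le_less_trans)
  qed
  ultimately show ?thesis
    unfolding prox_eq_argmin
    by (intro argmin_transfer[where L = eigvals]) (auto simp: prox_eq_argmin unitary_conj_diagm_in_Herm)
qed

theorem proposition1:
  fixes f :: "real^('n::{finite,linorder}) \<Rightarrow> ereal" and \<gamma> :: real
  assumes f_nonneg: "\<forall>x. 0 \<le> f x"
    and f_sym: "symmetric_fun f"
    and \<gamma>_pos: "\<gamma> > 0"
  defines "F \<equiv> (\<lambda>X :: complex^'n::{finite,linorder}^'n::{finite,linorder}. f (eigvals X))"
  shows "(\<forall>X \<in> Herm. qenv Herm \<gamma> F X = qenv UNIV \<gamma> f (eigvals X))
    \<and> ((\<exists>x. f x < \<infinity>) \<longrightarrow>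
        (\<forall>\<rho> > \<gamma>. \<forall>X \<in> Herm. \<forall>U. unitary U \<and> X = U ** diagm (eigvals X) ** adj U \<longrightarrow>
           prox Herm (qenv Herm \<gamma> F) \<rho> X
             = (\<lambda>v. U ** diagm v ** adj U) ` prox UNIV (qenv UNIV \<gamma> f) \<rho> (eigvals X)))"
  unfolding F_def using qenv_spectral[OF f_sym] prox_spectral[OF f_nonneg f_sym \<gamma>_pos] \<gamma>_pos
  by (simp add: less_imp_le)

end
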